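(* Let $(k,|\cdot|)$ be a complete non-Archimedean field of characteristic $p>0$ with nontrivial value group. The following are equivalent: (i) $K_n(k)$ is Frobenius split for each integer $n>0$; (ii) $K_n(k)$ has a nonzero $p^{-1}$-linear map for each integer $n>0$; (iii) there exists an integer $n>0$ for which $K_n(k)$ has a nonzero $p^{-1}$-linear map; (iv) $K_1(k)$ has a nonzero $p^{-1}$-linear map; (v) $K_1(k)$ is Frobenius split; (vi) there exists a nonzero continuous $k$-linear map $f\colon k^{1/p}\to k$.
   Context: A non-Archimedean field is a field with a multiplicative absolute value satisfying the ultrametric inequality, assumed complete and with nontrivial value group. The convergent power series ring $K_n(k)=k\langle X_1,\dots,X_n\rangle$ is the subring of $k[[X_1,\dots,X_n]]$ of series $\sum_{\nu}a_\nu X^\nu$ for which there exist real $r_1,\dots,r_n>0$ and $M>0$ with $|a_\nu|r_1^{\nu_1}\cdots r_n^{\nu_n}\le M$ for all $\nu\in\mathbb{Z}_{\ge0}^n$. For a ring $R$ of characteristic $p$, a $p^{-1}$-linear map is an $R$-linear map $F_{R*}R\to R$, where $F_{R*}R$ is $R$ with module structure $r\cdot x=r^px$; $R$ is Frobenius split if some such map sends $1$ to $1$. $k^{1/p}$ carries the unique absolute value extending that of $k$; continuity refers to the metric topologies. *)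

theory Defs
  imports Complex_Main "HOL-Computational_Algebra.Primes" "HOL-Algebra.Ring"
begin

definition nonarch_abs :: "('k::field \<Rightarrow> real) \<Rightarrow> bool" where
  "nonarch_abs absv \<longleftrightarrow>
     (\<forall>x. absv x \<ge> 0) \<and> (\<forall>x. absv x = 0 \<longleftrightarrow> x = 0) \<and>
     (\<forall>x y. absv (x * y) = absv x * absv y) \<and>
     (\<forall>x y. absv (x + y) \<le> max (absv x) (absv y))"

definition abs_complete :: "('k::field \<Rightarrow> real) \<Rightarrow> bool" where
  "abs_complete absv \<longleftrightarrow>
     (\<forall>X :: nat \<Rightarrow> 'k.
        (\<forall>e>0. \<exists>N. \<forall>m\<ge>N. \<forall>n\<ge>N. absv (X m - X n) < e) \<longrightarrow>
        (\<exists>L. \<forall>e>0. \<exists>N. \<forall>n\<ge>N. absv (X n - L) < e))"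

definition nontrivial_value_group :: "('k::field \<Rightarrow> real) \<Rightarrow> bool" where
  "nontrivial_value_group absv \<longleftrightarrow> (\<exists>x. absv x \<noteq> 0 \<and> absv x \<noteq> 1)"

text \<open>Multi-indices in Z_{>=0}^n are functions nat => nat vanishing at all i >= n.
  A power series is a coefficient function on multi-indices, zero off these.\<close>

definition idx :: "nat \<Rightarrow> (nat \<Rightarrow> nat) set" where
  "idx n = {\<nu>. \<forall>i\<ge>n. \<nu> i = 0}"

definition conv_series :: "('k::field \<Rightarrow> real) \<Rightarrow> nat \<Rightarrow> ((nat \<Rightarrow> nat) \<Rightarrow> 'k) set" where
  "conv_series absv n =
     {a. (\<forall>\<nu>. \<nu> \<notin> idx n \<longrightarrow> a \<nu> = 0) \<and>
         (\<exists>r :: nat \<Rightarrow> real. (\<forall>i<n. r i > 0) \<and>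
            (\<exists>M>0. \<forall>\<nu>\<in>idx n. absv (a \<nu>) * (\<Prod>i<n. r i ^ \<nu> i) \<le> M))}"

definition ps_mult :: "nat \<Rightarrow> ((nat \<Rightarrow> nat) \<Rightarrow> 'k::field) \<Rightarrow> ((nat \<Rightarrow> nat) \<Rightarrow> 'k) \<Rightarrow> (nat \<Rightarrow> nat) \<Rightarrow> 'k" where
  "ps_mult n a b = (\<lambda>\<nu>. if \<nu> \<in> idx n
      then (\<Sum>\<mu>\<in>{\<mu>\<in>idx n. \<forall>i. \<mu> i \<le> \<nu> i}. a \<mu> * b (\<lambda>i. \<nu> i - \<mu> i))
      else 0)"

definition K :: "('k::field \<Rightarrow> real) \<Rightarrow> nat \<Rightarrow> ((nat \<Rightarrow> nat) \<Rightarrow> 'k) ring" where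
  "K absv n = \<lparr> carrier = conv_series absv n,
                 mult = ps_mult n,
                 one = (\<lambda>\<nu>. if \<nu> = (\<lambda>_. 0) then 1 else 0),
                 zero = (\<lambda>_. 0),
                 add = (\<lambda>a b \<nu>. a \<nu> + b \<nu>) \<rparr>"

text \<open>A p^{-1}-linear map of R is an R-linear map F_*R -> R, i.e. an additive map
  phi : R -> R with phi (r^p x) = r phi x.\<close>

definition pinv_linear :: "('a, 'm) ring_scheme \<Rightarrow> nat \<Rightarrow> ('a \<Rightarrow> 'a) \<Rightarrow> bool" where
  "pinv_linear R p \<phi> \<longleftrightarrow>
     (\<forall>x\<in>carrier R. \<phi> x \<in> carrier R) \<and>
     (\<forall>x\<in>carrier R. \<forall>y\<in>carrier R. \<phi> (x \<oplus>\<^bsub>R\<^esub> y) = \<phi> x \<oplus>\<^bsub>R\<^esub> \<phi> y) \<and>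
     (\<forall>r\<in>carrier R. \<forall>x\<in>carrier R. \<phi> ((r [^]\<^bsub>R\<^esub> p) \<otimes>\<^bsub>R\<^esub> x) = r \<otimes>\<^bsub>R\<^esub> \<phi> x)"

definition has_nonzero_pinv_linear :: "('a, 'm) ring_scheme \<Rightarrow> nat \<Rightarrow> bool" where
  "has_nonzero_pinv_linear R p \<longleftrightarrow>
     (\<exists>\<phi>. pinv_linear R p \<phi> \<and> (\<exists>x\<in>carrier R. \<phi> x \<noteq> \<zero>\<^bsub>R\<^esub>))"

definition frobenius_split :: "('a, 'm) ring_scheme \<Rightarrow> nat \<Rightarrow> bool" where
  "frobenius_split R p \<longleftrightarrow> (\<exists>\<phi>. pinv_linear R p \<phi> \<and> \<phi> \<one>\<^bsub>R\<^esub> = \<one>\<^bsub>R\<^esub>)"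

text \<open>k^{1/p} is identified with k via y |-> y^p (an isomorphism of fields).
  Under it, the k-vector space structure of k^{1/p} becomes c . x = c^p x,
  and the unique extended absolute value |y| = |y^p|^{1/p} gives the metric
  d(x,x') = absv (x - x') powr (1/p) on k.  So a k-linear map k^{1/p} -> k
  is an additive g : k -> k with g (c^p x) = c g x.\<close>

definition root_p_linear :: "nat \<Rightarrow> ('k::field \<Rightarrow> 'k) \<Rightarrow> bool" where
  "root_p_linear p g \<longleftrightarrow>
     (\<forall>x y. g (x + y) = g x + g y) \<and> (\<forall>c x. g (c ^ p * x) = c * g x)"

definition root_p_continuous :: "('k::field \<Rightarrow> real) \<Rightarrow> nat \<Rightarrow> ('k \<Rightarrow> 'k) \<Rightarrow> bool" where
  "root_p_continuous absv p g \<longleftrightarrow>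
     (\<forall>x. \<forall>e>0. \<exists>d>0. \<forall>y. absv (y - x) powr (1 / real p) < d \<longrightarrow> absv (g y - g x) < e)"

end

theory Submission
  imports Defs "HOL-Library.Poly_Mapping"
begin

text \<open>
  A \<open>p\<^sup>-\<^sup>1\<close>-linear map \<open>\<phi>\<close> of \<open>K\<^sub>n\<close> yields, for multi-indices \<open>\<alpha>, \<beta>\<close>, the \<open>k\<close>-linear
  functional \<open>c \<mapsto> \<phi>(c X\<^sup>\<beta>)\<^sub>\<alpha>\<close> on \<open>k\<^sup>1\<^sup>/\<^sup>p\<close>, and some such functional is nonzero when \<open>\<phi>\<close> is,
  because the \<open>\<alpha>\<close>-coefficient of \<open>\<phi>(x)\<close> only depends on finitely many coefficients of \<open>x\<close>.
  The functional is bounded on the unit ball, hence continuous: otherwise one picks \<open>|c\<^sub>j| \<le> 1\<close>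
  one at a time so that, by the ultrametric inequality, \<open>\<phi>(\<Sum>\<^sub>j c\<^sub>j X\<^bsup>\<beta> + p d j e\<^sub>0\<^esup>)\<close> has
  coefficients growing faster than any geometric sequence, contradicting convergence.

  Conversely, a nonzero continuous \<open>g\<close>, rescaled so that \<open>g 1 = 1\<close>, satisfies
  \<open>|g y| \<le> C max 1 |y|\<^sup>1\<^sup>/\<^sup>p\<close>, so \<open>\<Sum> a\<^sub>\<nu> X\<^sup>\<nu> \<mapsto> \<Sum> g(a\<^sub>p\<^sub>\<nu>) X\<^sup>\<nu>\<close> preserves convergence; it is
  \<open>p\<^sup>-\<^sup>1\<close>-linear because \<open>(\<Sum> r\<^sub>\<nu> X\<^sup>\<nu>)\<^sup>p = \<Sum> r\<^sub>\<nu>\<^sup>p X\<^sup>p\<^sup>\<nu>\<close> in characteristic \<open>p\<close>, so it splits every \<open>K\<^sub>n\<close>.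
\<close>

section \<open>Multi-indices and monomials\<close>

definition lower_idx :: "nat \<Rightarrow> (nat\<Rightarrow>nat) \<Rightarrow> (nat\<Rightarrow>nat) set" where
  "lower_idx n \<nu> = {\<mu>\<in>idx n. \<forall>i. \<mu> i \<le> \<nu> i}"

definition ps_monom :: "'k::zero \<Rightarrow> (nat\<Rightarrow>nat) \<Rightarrow> (nat\<Rightarrow>nat) \<Rightarrow> 'k" where
  "ps_monom c \<gamma> = (\<lambda>\<nu>. if \<nu> = \<gamma> then c else 0)"

definition unit_idx :: "nat \<Rightarrow> nat \<Rightarrow> nat \<Rightarrow> nat" where
  "unit_idx i m = (\<lambda>j. if j = i then m else 0)"

lemma finite_lower_idx: "finite (lower_idx n \<nu>)"
proof -
  let ?E = "(\<lambda>f i. if i < n then f i else 0) ` PiE {..<n} (\<lambda>i. {..\<nu> i})"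
  have "lower_idx n \<nu> \<subseteq> ?E"
  proof
    fix \<mu> assume m: "\<mu> \<in> lower_idx n \<nu>"
    have "\<mu> = (\<lambda>i. if i < n then restrict \<mu> {..<n} i else 0)"
      using m by (auto simp: lower_idx_def idx_def)
    moreover have "restrict \<mu> {..<n} \<in> PiE {..<n} (\<lambda>i. {..\<nu> i})"
      using m by (auto simp: lower_idx_def)
    ultimately show "\<mu> \<in> ?E" by blast
  qed
  moreover have "finite ?E" by (intro finite_imageI finite_PiE) auto
  ultimately show ?thesis by (rule finite_subset)
qed

lemma idx_add: "\<mu> \<in> idx n \<Longrightarrow> \<nu> \<in> idx n \<Longrightarrow> (\<lambda>i. \<mu> i + \<nu> i) \<in> idx n"
  by (auto simp: idx_def)
lemma idx_diff: "\<nu> \<in> idx n \<Longrightarrow> (\<lambda>i. \<nu> i - \<mu> i) \<in> idx n"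
  by (auto simp: idx_def)
lemma idx_mult: "\<nu> \<in> idx n \<Longrightarrow> (\<lambda>i. m * \<nu> i) \<in> idx n"
  by (auto simp: idx_def)
lemma idx_zero: "(\<lambda>_. 0) \<in> idx n" by (auto simp: idx_def)
lemma idx_unit: "i < n \<Longrightarrow> unit_idx i m \<in> idx n" by (auto simp: idx_def unit_idx_def)

lemma ps_mult_monom_left:
  assumes g: "\<gamma> \<in> idx n"
  shows "ps_mult n (ps_monom c \<gamma>) y \<nu> =
    (if \<nu> \<in> idx n \<and> (\<forall>i. \<gamma> i \<le> \<nu> i) then c * y (\<lambda>i. \<nu> i - \<gamma> i) else 0)"
proof (cases "\<nu> \<in> idx n")
  case True
  have "ps_mult n (ps_monom c \<gamma>) y \<nu> = (\<Sum>\<mu>\<in>lower_idx n \<nu>. if \<mu> = \<gamma> then c * y (\<lambda>i. \<nu> i - \<gamma> i) else 0)"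
    using True unfolding ps_mult_def lower_idx_def[symmetric] ps_monom_def
    by (auto intro!: sum.cong)
  also have "\<dots> = (if \<gamma> \<in> lower_idx n \<nu> then c * y (\<lambda>i. \<nu> i - \<gamma> i) else 0)"
    by (simp add: finite_lower_idx)
  finally show ?thesis using True g by (simp add: lower_idx_def)
qed (simp add: ps_mult_def)

lemma ps_mult_monom_monom:
  assumes "\<gamma> \<in> idx n" "\<delta> \<in> idx n"
  shows "ps_mult n (ps_monom c \<gamma>) (ps_monom d \<delta>) = ps_monom (c*d) (\<lambda>i. \<gamma> i + \<delta> i)"
proof
  fix \<nu>
  show "ps_mult n (ps_monom c \<gamma>) (ps_monom d \<delta>) \<nu> = ps_monom (c*d) (\<lambda>i. \<gamma> i + \<delta> i) \<nu>"
  proof (cases "\<nu> \<in> idx n \<and> (\<forall>i. \<gamma> i \<le> \<nu> i)")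
    case True
    have "((\<lambda>i. \<nu> i - \<gamma> i) = \<delta>) = (\<nu> = (\<lambda>i. \<gamma> i + \<delta> i))"
      using True by (auto simp: fun_eq_iff; metis le_add_diff_inverse)
    then show ?thesis unfolding ps_mult_monom_left[OF assms(1)] using True by (simp add: ps_monom_def)
  next
    case False
    have "\<nu> \<noteq> (\<lambda>i. \<gamma> i + \<delta> i)" using False assms idx_add[OF assms] by auto
    then show ?thesis unfolding ps_mult_monom_left[OF assms(1)] using False by (auto simp: ps_monom_def)
  qed
qed

lemma K_simps:
  "carrier (K absv n) = conv_series absv n"
  "mult (K absv n) = ps_mult n"
  "one (K absv n) = ps_monom 1 (\<lambda>_. 0)"
  "zero (K absv n) = (\<lambda>_. 0)"
  "add (K absv n) = (\<lambda>a b \<nu>. a \<nu> + b \<nu>)"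
  by (auto simp: K_def ps_monom_def fun_eq_iff)

lemma K_pow_0: "a [^]\<^bsub>K absv n\<^esub> (0::nat) = ps_monom 1 (\<lambda>_. 0)"
  by (simp add: K_simps)
lemma K_pow_Suc: "a [^]\<^bsub>K absv n\<^esub> (Suc m) = ps_mult n (a [^]\<^bsub>K absv n\<^esub> m) a"
  by (simp add: nat_pow_def K_simps)

lemma K_pow_ps_monom:
  assumes "\<gamma> \<in> idx n"
  shows "(ps_monom c \<gamma>) [^]\<^bsub>K absv n\<^esub> m = ps_monom (c^m) (\<lambda>i. m * \<gamma> i)"
proof (induction m)
  case 0 then show ?case by (simp add: K_pow_0 K_simps)
next
  case (Suc m)
  then show ?case using assms idx_mult[OF assms, of m]
    by (simp add: K_pow_Suc K_simps ps_mult_monom_monom algebra_simps)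
qed

lemma prod_power_add:
  fixes r :: "nat \<Rightarrow> 'a::comm_monoid_mult"
  shows "(\<Prod>i<n. r i ^ (\<nu> i + \<delta> i)) = (\<Prod>i<n. r i ^ \<nu> i) * (\<Prod>i<n. r i ^ \<delta> i)"
  by (simp add: power_add prod.distrib)

lemma prod_power_unit_idx:
  fixes r :: "nat \<Rightarrow> 'a::comm_monoid_mult"
  assumes "i < n"
  shows "(\<Prod>j<n. r j ^ unit_idx i m j) = r i ^ m"
proof -
  have "(\<Prod>j<n. r j ^ unit_idx i m j) = (\<Prod>j<n. if j = i then r i ^ m else 1)"
    by (intro prod.cong) (auto simp: unit_idx_def)
  then show ?thesis using assms by simp
qed

section \<open>Convergent power series over a non-Archimedean field\<close>

locale nonarch_field =
  fixes absv :: "'k::field \<Rightarrow> real"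
  assumes nonarch: "nonarch_abs absv"
begin

lemma absv_nonneg: "absv x \<ge> 0" using nonarch by (simp add: nonarch_abs_def)
lemma absv_eq_0_iff: "absv x = 0 \<longleftrightarrow> x = 0" using nonarch by (simp add: nonarch_abs_def)
lemma absv_mult: "absv (x * y) = absv x * absv y" using nonarch by (simp add: nonarch_abs_def)
lemma absv_ultrametric: "absv (x + y) \<le> max (absv x) (absv y)" using nonarch by (simp add: nonarch_abs_def)
lemma absv_0[simp]: "absv 0 = 0" using absv_eq_0_iff by simp
lemma absv_1[simp]: "absv 1 = 1"
proof -
  have "absv 1 = absv 1 * absv 1" using absv_mult[of 1 1] by simp
  moreover have "absv 1 \<noteq> 0" using absv_eq_0_iff by simp
  ultimately show ?thesis by simp
qed

lemma absv_minus_1: "absv (-1) = 1"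
proof -
  have "absv (-1) * absv (-1) = 1" using absv_mult[of "-1" "-1"] by simp
  moreover have "absv (-1) \<ge> 0" by (rule absv_nonneg)
  ultimately show ?thesis by (metis abs_of_nonneg abs_one real_sqrt_abs2 real_sqrt_one)
qed

lemma absv_minus: "absv (- x) = absv x"
  using absv_mult[of "-1" x] absv_minus_1 by simp
lemma absv_power: "absv (x ^ m) = absv x ^ m"
  by (induction m) (auto simp: absv_mult)
lemma absv_triangle: "absv (x + y) \<le> absv x + absv y"
  using absv_ultrametric[of x y] absv_nonneg[of x] absv_nonneg[of y] by linarith
lemma absv_inverse: "absv (inverse x) = inverse (absv x)"
proof (cases "x = 0")
  case False
  then have "absv x * absv (inverse x) = 1" using absv_mult[of x "inverse x"] by simp
  moreover have "absv x \<noteq> 0" using False absv_eq_0_iff by simp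
  ultimately show ?thesis by (metis inverse_unique mult.commute)
qed simp

lemma absv_add_dominant: "absv y < absv x \<Longrightarrow> absv x \<le> absv (x + y)"
proof -
  assume a: "absv y < absv x"
  have "absv x \<le> max (absv (x + y)) (absv (- y))" using absv_ultrametric[of "x + y" "- y"] by simp
  then show ?thesis using a absv_minus[of y] by (auto simp: max_def split: if_splits)
qed

lemma conv_series_outside: "a \<in> conv_series absv n \<Longrightarrow> \<nu> \<notin> idx n \<Longrightarrow> a \<nu> = 0"
  by (simp add: conv_series_def)

lemma conv_seriesE: assumes "a \<in> conv_series absv n"
  obtains r M where "\<forall>i<n. r i > 0" "M > 0" "\<forall>\<nu>\<in>idx n. absv (a \<nu>) * (\<Prod>i<n. r i ^ \<nu> i) \<le> M"
  using assms by (auto simp: conv_series_def)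

lemma bounded_in_conv_series:
  assumes "\<forall>\<nu>. \<nu> \<notin> idx n \<longrightarrow> a \<nu> = 0" "\<forall>\<nu>. absv (a \<nu>) \<le> B"
  shows "a \<in> conv_series absv n"
proof -
  have "\<forall>\<nu>\<in>idx n. absv (a \<nu>) * (\<Prod>i<n. (1::real) ^ \<nu> i) \<le> max B 1"
    using assms(2) by (auto intro: le_max_iff_disj[THEN iffD2])
  then show ?thesis using assms(1) unfolding conv_series_def
    by (intro CollectI conjI) (auto intro!: exI[of _ "\<lambda>_. 1"] exI[of _ "max B 1"])
qed

lemma ps_monom_in: "\<gamma> \<in> idx n \<Longrightarrow> ps_monom c \<gamma> \<in> conv_series absv n"
  by (rule bounded_in_conv_series[where B = "absv c"]) (auto simp: ps_monom_def absv_nonneg)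

lemma zero_in_conv_series: "(\<lambda>_. 0) \<in> conv_series absv n"
  by (rule bounded_in_conv_series[where B = 0]) auto

lemma add_in_conv_series:
  assumes "a \<in> conv_series absv n" "b \<in> conv_series absv n"
  shows "(\<lambda>\<nu>. a \<nu> + b \<nu>) \<in> conv_series absv n"
proof -
  obtain r M where r: "\<forall>i<n. r i > 0" "M > 0" "\<forall>\<nu>\<in>idx n. absv (a \<nu>) * (\<Prod>i<n. r i ^ \<nu> i) \<le> M"
    using conv_seriesE[OF assms(1)] by blast
  obtain s N where s: "\<forall>i<n. s i > 0" "N > 0" "\<forall>\<nu>\<in>idx n. absv (b \<nu>) * (\<Prod>i<n. s i ^ \<nu> i) \<le> N"
    using conv_seriesE[OF assms(2)] by blast
  define t where "t i = min (r i) (s i)" for i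
  have tp: "\<forall>i<n. t i > 0" using r s by (simp add: t_def)
  have "absv (a \<nu> + b \<nu>) * (\<Prod>i<n. t i ^ \<nu> i) \<le> M + N" if "\<nu> \<in> idx n" for \<nu>
  proof -
    have pt: "(\<Prod>i<n. t i ^ \<nu> i) \<ge> 0" using tp by (intro prod_nonneg) auto
    have "(\<Prod>i<n. t i ^ \<nu> i) \<le> (\<Prod>i<n. r i ^ \<nu> i)"
      using tp by (intro prod_mono) (auto simp: t_def intro!: power_mono)
    then have 1: "absv (a \<nu>) * (\<Prod>i<n. t i ^ \<nu> i) \<le> M"
      using r(3) that absv_nonneg[of "a \<nu>"] by (meson mult_left_mono order_trans)
    have "(\<Prod>i<n. t i ^ \<nu> i) \<le> (\<Prod>i<n. s i ^ \<nu> i)"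
      using tp by (intro prod_mono) (auto simp: t_def intro!: power_mono)
    then have 2: "absv (b \<nu>) * (\<Prod>i<n. t i ^ \<nu> i) \<le> N"
      using s(3) that absv_nonneg[of "b \<nu>"] by (meson mult_left_mono order_trans)
    have "absv (a \<nu> + b \<nu>) * (\<Prod>i<n. t i ^ \<nu> i) \<le> (absv (a \<nu>) + absv (b \<nu>)) * (\<Prod>i<n. t i ^ \<nu> i)"
      using absv_triangle pt by (intro mult_right_mono) auto
    then show ?thesis using 1 2 by (simp add: distrib_right)
  qed
  then show ?thesis using assms tp r(2) s(2) unfolding conv_series_def
    by (intro CollectI conjI) (auto intro!: exI[of _ t] exI[of _ "M + N"])
qed

lemma sum_in_conv_series:
  assumes "finite A" "\<forall>j\<in>A. F j \<in> conv_series absv n"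
  shows "(\<lambda>\<nu>. \<Sum>j\<in>A. F j \<nu>) \<in> conv_series absv n"
  using assms
proof (induction A rule: finite_induct)
  case empty then show ?case using zero_in_conv_series by simp
next
  case (insert x A)
  then show ?case using add_in_conv_series[of "F x" n "\<lambda>\<nu>. \<Sum>j\<in>A. F j \<nu>"] by simp
qed

lemma restrict_in_conv_series:
  assumes "a \<in> conv_series absv n"
  shows "(\<lambda>\<nu>. if P \<nu> then a \<nu> else 0) \<in> conv_series absv n"
proof -
  obtain r M where r: "\<forall>i<n. r i > 0" "M > 0" "\<forall>\<nu>\<in>idx n. absv (a \<nu>) * (\<Prod>i<n. r i ^ \<nu> i) \<le> M"
    using conv_seriesE[OF assms(1)] by blast
  have "\<forall>\<nu>\<in>idx n. absv (if P \<nu> then a \<nu> else 0) * (\<Prod>i<n. r i ^ \<nu> i) \<le> M"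
    using r by auto
  then show ?thesis using assms r unfolding conv_series_def
    by (intro CollectI conjI) (auto intro!: exI[of _ r] exI[of _ M])
qed

lemma shift_in_conv_series:
  assumes "a \<in> conv_series absv n" "\<delta> \<in> idx n"
  shows "(\<lambda>\<nu>. if \<nu> \<in> idx n then a (\<lambda>i. \<nu> i + \<delta> i) else 0) \<in> conv_series absv n"
proof -
  obtain r M where r: "\<forall>i<n. r i > 0" "M > 0" "\<forall>\<nu>\<in>idx n. absv (a \<nu>) * (\<Prod>i<n. r i ^ \<nu> i) \<le> M"
    using conv_seriesE[OF assms(1)] by blast
  define D where "D = (\<Prod>i<n. r i ^ \<delta> i)"
  have D: "D > 0" using r by (auto simp: D_def intro!: prod_pos)
  have "absv (a (\<lambda>i. \<nu> i + \<delta> i)) * (\<Prod>i<n. r i ^ \<nu> i) \<le> M / D" if "\<nu> \<in> idx n" for \<nu>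
  proof -
    have "absv (a (\<lambda>i. \<nu> i + \<delta> i)) * (\<Prod>i<n. r i ^ \<nu> i) * D \<le> M"
      using r(3) idx_add[OF that assms(2)] by (simp add: prod_power_add[symmetric] D_def mult.assoc)
    then show ?thesis using D by (simp add: field_simps)
  qed
  then have "\<forall>\<nu>\<in>idx n. absv (if \<nu> \<in> idx n then a (\<lambda>i. \<nu> i + \<delta> i) else 0) * (\<Prod>i<n. r i ^ \<nu> i) \<le> M / D"
    by auto
  then show ?thesis using r D unfolding conv_series_def
    by (intro CollectI conjI) (auto intro!: exI[of _ r] exI[of _ "M / D"])
qed

text \<open>Along a ray the coefficients of a convergent series grow at most geometrically.\<close>

lemma conv_series_coeff_growth:
  assumes a: "a \<in> conv_series absv n" and \<alpha>: "\<alpha> \<in> idx n" and n0: "0 < n"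
  obtains J where "absv (a (\<lambda>i. \<alpha> i + unit_idx 0 (d * J) i)) < (real J + 1) ^ (J + 1)"
proof -
  obtain r M where r: "\<forall>i<n. r i > 0" "M > 0"
    "\<forall>\<nu>\<in>idx n. absv (a \<nu>) * (\<Prod>i<n. r i ^ \<nu> i) \<le> M"
    using conv_seriesE[OF a] by blast
  define A where "A = (\<Prod>i<n. r i ^ \<alpha> i)"
  have A0: "A > 0" using r by (auto simp: A_def intro!: prod_pos)
  define q where "q = r 0 ^ d"
  have q0: "q > 0" using r n0 by (simp add: q_def)
  define J where "J = nat (ceiling (max (M / A) (1 / q)))"
  have J: "M / A \<le> real J" "1 / q \<le> real J" unfolding J_def by linarith+
  define c where "c = a (\<lambda>i. \<alpha> i + unit_idx 0 (d * J) i)"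
  have upper: "absv c * (A * q ^ J) \<le> M"
  proof -
    have "absv c * (\<Prod>i<n. r i ^ (\<alpha> i + unit_idx 0 (d * J) i)) \<le> M"
      unfolding c_def using r(3) idx_add[OF \<alpha> idx_unit[OF n0]] by blast
    moreover have "(\<Prod>i<n. r i ^ (\<alpha> i + unit_idx 0 (d * J) i)) = A * q ^ J"
      by (simp add: prod_power_add A_def prod_power_unit_idx[OF n0] q_def power_mult)
    ultimately show ?thesis by simp
  qed
  have "1 \<le> ((real J + 1) * q) ^ J" using J(2) q0 by (intro one_le_power) (simp add: field_simps)
  then have "(real J + 1) * A \<le> (real J + 1) ^ (J + 1) * (A * q ^ J)"
    using A0 by (simp add: power_mult_distrib mult_ac)
  moreover have "M < (real J + 1) * A" using J(1) A0 by (simp add: field_simps)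
  ultimately have "absv c < (real J + 1) ^ (J + 1)"
    using upper A0 q0 by (smt (verit) mult_right_mono zero_less_mult_iff zero_less_power)
  then show ?thesis using that c_def by blast
qed

end

section \<open>Linear maps from \<open>k\<^sup>1\<^sup>/\<^sup>p\<close> to \<open>k\<close>\<close>

lemma root_p_linear_0: "root_p_linear p f \<Longrightarrow> f 0 = 0"
  unfolding root_p_linear_def by (metis add_cancel_right_right add_0)

lemma root_p_linear_diff: "root_p_linear p f \<Longrightarrow> f (y - x) = f y - f x"
  unfolding root_p_linear_def by (metis add_diff_cancel_left' diff_add_cancel eq_diff_eq)

lemma root_p_linear_sum: "root_p_linear p h \<Longrightarrow> h (\<Sum>j\<in>A. f j) = (\<Sum>j\<in>A. h (f j))"
proof (induction A rule: infinite_finite_induct)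
  case (infinite A) then show ?case using root_p_linear_0 by simp
next
  case empty then show ?case using root_p_linear_0 by simp
next
  case (insert x F) then show ?case by (simp add: root_p_linear_def)
qed

lemma power_powr_inverse: "0 \<le> x \<Longrightarrow> 0 < p \<Longrightarrow> ((x::real) ^ p) powr (1 / real p) = x"
  by (cases "x = 0") (auto simp: powr_realpow[symmetric] powr_powr)

lemma max_1_mult_le: "0 \<le> a \<Longrightarrow> 0 \<le> b \<Longrightarrow> max 1 (a * b) \<le> max 1 a * max (1::real) b"
  by (simp add: max_def mult_mono) (smt (verit) mult_le_cancel_left1 mult_le_cancel_right1 mult_nonneg_nonneg)

context nonarch_field
begin

lemma exists_absv_gt_1:
  assumes "nontrivial_value_group absv"
  shows "\<exists>\<pi>. absv \<pi> > 1"
proof -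
  obtain a where a: "absv a \<noteq> 0" "absv a \<noteq> 1" using assms by (auto simp: nontrivial_value_group_def)
  show ?thesis
  proof (cases "absv a > 1")
    case False
    then have "absv a < 1" "absv a > 0" using a absv_nonneg[of a] by auto
    then have "absv (inverse a) > 1" using absv_inverse[of a] by (simp add: one_less_inverse)
    then show ?thesis by blast
  qed blast
qed

lemma root_p_continuous_if_bounded:
  assumes nt: "nontrivial_value_group absv" and f: "root_p_linear p f" and p0: "0 < p"
    and bounded: "\<And>c. absv c \<le> 1 \<Longrightarrow> absv (f c) \<le> T"
  shows "root_p_continuous absv p f"
proof (rule ccontr)
  assume "\<not> root_p_continuous absv p f"
  then obtain x e where e: "e > 0" and
    discont: "\<forall>d>0. \<exists>y. absv (y - x) powr (1 / real p) < d \<and> \<not> absv (f y - f x) < e"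
    unfolding root_p_continuous_def by blast
  obtain \<pi> where \<pi>: "absv \<pi> > 1" using exists_absv_gt_1[OF nt] by blast
  obtain m where m: "T / e < absv \<pi> ^ m" using real_arch_pow[OF \<pi>] by blast
  define D where "D = inverse (absv \<pi> ^ (m * p))"
  have D0: "D > 0" using \<pi> by (simp add: D_def)
  define d where "d = D powr (1 / real p)"
  have d0: "d > 0" using D0 by (simp add: d_def)
  obtain y where y: "absv (y - x) powr (1 / real p) < d" "\<not> absv (f y - f x) < e"
    using discont d0 by blast
  define z where "z = y - x"
  have fz: "e \<le> absv (f z)" using y(2) root_p_linear_diff[OF f] by (simp add: z_def)
  have "(absv z powr (1 / real p)) powr real p < d powr real p"
    using y(1) p0 by (intro powr_less_mono2) (auto simp: z_def)
  then have zD: "absv z < D" using p0 D0 absv_nonneg[of z] by (simp add: d_def powr_powr)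
  \<comment> \<open>Rescaling by \<open>\<pi>\<^sup>m\<^sup>p\<close> keeps \<open>z\<close> in the unit ball but multiplies \<open>f z\<close> by \<open>\<pi>\<^sup>m\<close>.\<close>
  define c where "c = (\<pi> ^ m) ^ p * z"
  have "absv c = (absv \<pi> ^ m) ^ p * absv z" by (simp add: c_def absv_mult absv_power)
  also have "\<dots> \<le> (absv \<pi> ^ m) ^ p * D" using zD \<pi> by (intro mult_left_mono) auto
  also have "\<dots> = 1" using \<pi> by (simp add: D_def power_mult)
  finally have c1: "absv c \<le> 1" .
  have "T < absv \<pi> ^ m * e" using m e by (simp add: field_simps)
  also have "\<dots> \<le> absv \<pi> ^ m * absv (f z)" using fz \<pi> by (intro mult_left_mono) auto
  also have "\<dots> = absv (f c)" using f by (simp add: c_def root_p_linear_def absv_mult absv_power)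
  finally show False using bounded[OF c1] by simp
qed

lemma root_p_linear_bound_on_balls:
  assumes g: "root_p_linear p g" and p0: "0 < p" and \<pi>: "1 < absv \<pi>"
    and small: "\<And>y. absv y powr (1 / real p) < d \<Longrightarrow> absv (g y) < 1"
    and y: "absv y powr (1 / real p) < d * absv \<pi> ^ k"
  shows "absv (g y) < absv \<pi> ^ k"
proof -
  define t where "t = inverse \<pi> ^ k"
  have t: "absv t = inverse (absv \<pi> ^ k)" by (simp add: t_def absv_power absv_inverse power_inverse)
  have "absv (t ^ p * y) powr (1 / real p) = (absv t ^ p) powr (1 / real p) * absv y powr (1 / real p)"
    by (simp add: absv_mult absv_power powr_mult absv_nonneg)
  also have "(absv t ^ p) powr (1 / real p) = absv t"
    using p0 absv_nonneg[of t] by (rule power_powr_inverse[rotated])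
  also have "absv t * absv y powr (1 / real p) < absv t * (d * absv \<pi> ^ k)"
    using y \<pi> t by (intro mult_strict_left_mono) auto
  also have "\<dots> = d" using \<pi> t by simp
  finally have "absv (g (t ^ p * y)) < 1" by (rule small)
  then have "inverse (absv \<pi> ^ k) * absv (g y) < 1" using g t
    by (simp add: root_p_linear_def absv_mult)
  then show ?thesis using \<pi> by (simp add: field_simps)
qed

lemma continuous_root_p_linear_bound:
  assumes nt: "nontrivial_value_group absv" and g: "root_p_linear p g"
    and cont: "root_p_continuous absv p g" and p0: "0 < p"
  shows "\<exists>C>0. \<forall>y. absv (g y) \<le> C * max 1 (absv y powr (1 / real p))"
proof -
  obtain \<pi> where \<pi>: "absv \<pi> > 1" using exists_absv_gt_1[OF nt] by blast
  define \<rho> where "\<rho> = absv \<pi>"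
  obtain d where d: "d > 0" and "\<forall>y. absv (y - 0) powr (1 / real p) < d \<longrightarrow> absv (g y - g 0) < 1"
    using cont unfolding root_p_continuous_def by (meson zero_less_one)
  then have small: "absv (g y) < 1" if "absv y powr (1 / real p) < d" for y
    using that root_p_linear_0[OF g] by simp
  define C where "C = max 1 (\<rho> / d)"
  have "absv (g y) \<le> C * max 1 (absv y powr (1 / real p))" for y
  proof -
    define s where "s = absv y powr (1 / real p)"
    have "\<exists>k. s / d < \<rho> ^ k" using real_arch_pow \<pi> by (simp add: \<rho>_def)
    define k where "k = (LEAST k. s / d < \<rho> ^ k)"
    have k: "s / d < \<rho> ^ k" using \<open>\<exists>k. s / d < \<rho> ^ k\<close> unfolding k_def by (rule LeastI_ex)
    have k_min: "\<rho> ^ j \<le> s / d" if "j < k" for j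
      using not_less_Least[OF that[unfolded k_def]] by simp
    have "absv (g y) < \<rho> ^ k"
      using root_p_linear_bound_on_balls[OF g p0 \<pi> small, where y = y and k = k] k d by (simp add: \<rho>_def s_def field_simps)
    moreover have "\<rho> ^ k \<le> C * max 1 s"
    proof (cases k)
      case 0
      have "1 * 1 \<le> C * max 1 s" by (rule mult_mono) (auto simp: C_def)
      then show ?thesis using 0 by simp
    next
      case (Suc j)
      then have "\<rho> ^ k = \<rho> * \<rho> ^ j" by simp
      also have "\<dots> \<le> \<rho> * (s / d)" using k_min[of j] \<pi> Suc by (intro mult_left_mono) (auto simp: \<rho>_def)
      also have "\<dots> = (\<rho> / d) * s" by simp
      also have "\<dots> \<le> C * max 1 s" using d \<pi> by (intro mult_mono) (auto simp: C_def \<rho>_def s_def)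
      finally show ?thesis .
    qed
    ultimately show ?thesis by (simp add: s_def)
  qed
  moreover have "C > 0" by (simp add: C_def)
  ultimately show ?thesis by blast
qed

end

section \<open>The \<open>p\<close>-th power map of \<open>K\<^sub>n\<close>\<close>

definition to_pm :: "(nat \<Rightarrow> nat) \<Rightarrow> (nat \<Rightarrow>\<^sub>0 nat)" where "to_pm = Abs_poly_mapping"

lemma finite_support_idx: "\<nu> \<in> idx n \<Longrightarrow> finite {i. \<nu> i \<noteq> 0}"
  by (rule finite_subset[of _ "{..<n}"]) (auto simp: idx_def not_less[symmetric])

lemma lookup_to_pm: "\<nu> \<in> idx n \<Longrightarrow> Poly_Mapping.lookup (to_pm \<nu>) = \<nu>"
  unfolding to_pm_def by (rule lookup_Abs_poly_mapping[OF finite_support_idx])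

lemma to_pm_eq_iff: "\<nu> \<in> idx n \<Longrightarrow> \<mu> \<in> idx n \<Longrightarrow> (to_pm \<nu> = to_pm \<mu>) = (\<nu> = \<mu>)"
  by (metis lookup_to_pm)

lemma to_pm_lookup: "to_pm (Poly_Mapping.lookup k) = k"
  by (simp add: to_pm_def poly_mapping.lookup_inverse)

lemma Sum_any_lookup_when_to_pm:
  fixes g :: "(nat \<Rightarrow>\<^sub>0 nat) \<Rightarrow>\<^sub>0 'a::comm_semiring_1"
  assumes \<nu>: "\<nu> \<in> idx n"
  shows "Sum_any (\<lambda>q. Poly_Mapping.lookup g q when to_pm \<nu> = l + q) =
    (if l \<in> to_pm ` lower_idx n \<nu> then Poly_Mapping.lookup g (to_pm (\<lambda>i. \<nu> i - Poly_Mapping.lookup l i)) else 0)"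
proof (cases "l \<in> to_pm ` lower_idx n \<nu>")
  case True
  then obtain \<mu> where \<mu>: "\<mu> \<in> lower_idx n \<nu>" "l = to_pm \<mu>" by blast
  have l: "Poly_Mapping.lookup l = \<mu>" using \<mu> lookup_to_pm[of \<mu> n] by (simp add: lower_idx_def)
  have "(to_pm \<nu> = l + q) = (q = to_pm (\<lambda>i. \<nu> i - \<mu> i))" for q
  proof
    assume "to_pm \<nu> = l + q"
    then have "\<nu> = (\<lambda>i. \<mu> i + Poly_Mapping.lookup q i)"
      using lookup_to_pm[OF \<nu>] l by (metis lookup_add ext)
    then have "Poly_Mapping.lookup q = (\<lambda>i. \<nu> i - \<mu> i)" by auto
    then show "q = to_pm (\<lambda>i. \<nu> i - \<mu> i)" by (metis to_pm_lookup)
  next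
    assume "q = to_pm (\<lambda>i. \<nu> i - \<mu> i)"
    then have "Poly_Mapping.lookup (l + q) = \<nu>"
      using l \<mu> lookup_to_pm[OF idx_diff[OF \<nu>]] by (auto simp: lookup_add lower_idx_def fun_eq_iff)
    then show "to_pm \<nu> = l + q" by (metis to_pm_lookup)
  qed
  then have "Sum_any (\<lambda>q. Poly_Mapping.lookup g q when to_pm \<nu> = l + q)
      = Sum_any (\<lambda>q. if q = to_pm (\<lambda>i. \<nu> i - \<mu> i) then Poly_Mapping.lookup g q else 0)"
    by (simp add: when_def)
  then show ?thesis using True l by simp
next
  case False
  have "to_pm \<nu> \<noteq> l + q" for q
  proof
    assume "to_pm \<nu> = l + q"
    then have "\<nu> = (\<lambda>i. Poly_Mapping.lookup l i + Poly_Mapping.lookup q i)"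
      using lookup_to_pm[OF \<nu>] by (metis lookup_add ext)
    then have "Poly_Mapping.lookup l \<in> lower_idx n \<nu>" using \<nu> by (auto simp: lower_idx_def idx_def)
    then show False using False by (metis image_eqI to_pm_lookup)
  qed
  then show ?thesis using False by simp
qed

lemma lookup_times_to_pm:
  fixes f g :: "(nat \<Rightarrow>\<^sub>0 nat) \<Rightarrow>\<^sub>0 'a::comm_semiring_1"
  assumes \<nu>: "\<nu> \<in> idx n"
  shows "Poly_Mapping.lookup (f * g) (to_pm \<nu>) =
    (\<Sum>\<mu>\<in>lower_idx n \<nu>. Poly_Mapping.lookup f (to_pm \<mu>) * Poly_Mapping.lookup g (to_pm (\<lambda>i. \<nu> i - \<mu> i)))"
proof -
  let ?A = "to_pm ` lower_idx n \<nu>"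
  have "Poly_Mapping.lookup (f * g) (to_pm \<nu>)
      = Sum_any (\<lambda>l. if l \<in> ?A then Poly_Mapping.lookup f l * Poly_Mapping.lookup g (to_pm (\<lambda>i. \<nu> i - Poly_Mapping.lookup l i)) else 0)"
    unfolding lookup_mult Sum_any_lookup_when_to_pm[OF \<nu>] by (simp add: if_distrib cong: if_cong)
  also have "\<dots> = (\<Sum>l\<in>?A. Poly_Mapping.lookup f l * Poly_Mapping.lookup g (to_pm (\<lambda>i. \<nu> i - Poly_Mapping.lookup l i)))"
    by (rule Sum_any.conditionalize[symmetric]) (simp add: finite_lower_idx)
  also have "\<dots> = (\<Sum>\<mu>\<in>lower_idx n \<nu>. Poly_Mapping.lookup f (to_pm \<mu>) * Poly_Mapping.lookup g (to_pm (\<lambda>i. \<nu> i - Poly_Mapping.lookup (to_pm \<mu>) i)))"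
    by (rule sum.reindex[unfolded comp_def]) (auto simp: inj_on_def lower_idx_def to_pm_eq_iff)
  also have "\<dots> = (\<Sum>\<mu>\<in>lower_idx n \<nu>. Poly_Mapping.lookup f (to_pm \<mu>) * Poly_Mapping.lookup g (to_pm (\<lambda>i. \<nu> i - \<mu> i)))"
    by (intro sum.cong) (auto simp: lower_idx_def lookup_to_pm)
  finally show ?thesis .
qed

text \<open>On coefficients below \<open>N\<close>, products in \<open>K\<^sub>n\<close> agree with products of the truncations to
  \<open>N\<close>, taken in the monoid ring over \<open>nat \<Rightarrow>\<^sub>0 nat\<close>; there the freshman's dream is available.\<close>

definition trunc_pm :: "nat \<Rightarrow> (nat \<Rightarrow> nat) \<Rightarrow> ((nat \<Rightarrow> nat) \<Rightarrow> 'a) \<Rightarrow> (nat \<Rightarrow>\<^sub>0 nat) \<Rightarrow>\<^sub>0 'a::comm_semiring_1" where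
  "trunc_pm n N a = (\<Sum>\<gamma>\<in>lower_idx n N. Poly_Mapping.single (to_pm \<gamma>) (a \<gamma>))"

lemma lookup_trunc_pm: "\<kappa> \<in> idx n \<Longrightarrow> Poly_Mapping.lookup (trunc_pm n N a) (to_pm \<kappa>) = (if \<kappa> \<in> lower_idx n N then a \<kappa> else 0)"
proof -
  assume k: "\<kappa> \<in> idx n"
  have "Poly_Mapping.lookup (trunc_pm n N a) (to_pm \<kappa>) = (\<Sum>\<gamma>\<in>lower_idx n N. if \<gamma> = \<kappa> then a \<gamma> else 0)"
    unfolding trunc_pm_def lookup_sum lookup_single
    by (intro sum.cong) (auto simp: when_def lower_idx_def to_pm_eq_iff[OF _ k])
  then show ?thesis by (simp add: finite_lower_idx)
qed

lemma K_pow_eq_lookup_trunc_pm: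
  fixes a :: "(nat \<Rightarrow> nat) \<Rightarrow> 'k::field"
  assumes \<nu>: "\<nu> \<in> idx n" "\<forall>i. \<nu> i \<le> N i"
  shows "(a [^]\<^bsub>K absv n\<^esub> m) \<nu> = Poly_Mapping.lookup ((trunc_pm n N a) ^ m) (to_pm \<nu>)"
  using \<nu>
proof (induction m arbitrary: \<nu>)
  case 0
  have z: "to_pm (\<lambda>_. 0) = 0"
    by (rule poly_mapping_eqI) (simp add: lookup_to_pm[OF idx_zero])
  have "(to_pm \<nu> = 0) = (\<nu> = (\<lambda>_. 0))"
    using to_pm_eq_iff[OF 0(1) idx_zero] z by simp
  then show ?case by (simp add: K_pow_0 K_simps lookup_one ps_monom_def when_def)
next
  case (Suc m)
  have "(a [^]\<^bsub>K absv n\<^esub> Suc m) \<nu> = (\<Sum>\<mu>\<in>lower_idx n \<nu>. (a [^]\<^bsub>K absv n\<^esub> m) \<mu> * a (\<lambda>i. \<nu> i - \<mu> i))"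
    using Suc.prems by (simp add: K_pow_Suc K_simps ps_mult_def lower_idx_def)
  also have "\<dots> = (\<Sum>\<mu>\<in>lower_idx n \<nu>. Poly_Mapping.lookup ((trunc_pm n N a) ^ m) (to_pm \<mu>) * Poly_Mapping.lookup (trunc_pm n N a) (to_pm (\<lambda>i. \<nu> i - \<mu> i)))"
  proof (intro sum.cong refl)
    fix \<mu> assume mu: "\<mu> \<in> lower_idx n \<nu>"
    have "(a [^]\<^bsub>K absv n\<^esub> m) \<mu> = Poly_Mapping.lookup ((trunc_pm n N a) ^ m) (to_pm \<mu>)"
      using mu Suc.prems by (intro Suc.IH) (auto simp: lower_idx_def intro: le_trans)
    moreover have "Poly_Mapping.lookup (trunc_pm n N a) (to_pm (\<lambda>i. \<nu> i - \<mu> i)) = a (\<lambda>i. \<nu> i - \<mu> i)"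
    proof -
      have "\<forall>i. \<nu> i - \<mu> i \<le> N i" using Suc.prems(2) by (meson diff_le_self le_trans)
      then show ?thesis using idx_diff[OF Suc.prems(1)] by (subst lookup_trunc_pm) (auto simp: lower_idx_def)
    qed
    ultimately show "(a [^]\<^bsub>K absv n\<^esub> m) \<mu> * a (\<lambda>i. \<nu> i - \<mu> i) =
      Poly_Mapping.lookup ((trunc_pm n N a) ^ m) (to_pm \<mu>) * Poly_Mapping.lookup (trunc_pm n N a) (to_pm (\<lambda>i. \<nu> i - \<mu> i))" by simp
  qed
  also have "\<dots> = Poly_Mapping.lookup ((trunc_pm n N a) ^ m * trunc_pm n N a) (to_pm \<nu>)"
    by (rule lookup_times_to_pm[OF Suc.prems(1), symmetric])
  finally show ?case unfolding power_Suc2 .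
qed

lemma single_power_to_pm:
  assumes "\<gamma> \<in> idx n"
  shows "(Poly_Mapping.single (to_pm \<gamma>) (v::'a::comm_semiring_1)) ^ m = Poly_Mapping.single (to_pm (\<lambda>i. m * \<gamma> i)) (v ^ m)"
proof (induction m)
  case 0
  have z: "to_pm (\<lambda>i. 0 * \<gamma> i) = 0"
    by (rule poly_mapping_eqI) (simp add: lookup_to_pm[OF idx_zero])
  show ?case by (simp only: z power_0 single_one)
next
  case (Suc m)
  have "to_pm \<gamma> + to_pm (\<lambda>i. m * \<gamma> i) = to_pm (\<lambda>i. Suc m * \<gamma> i)"
    by (rule poly_mapping_eqI) (simp add: lookup_add lookup_to_pm[OF assms] lookup_to_pm[OF idx_mult[OF assms]]
         lookup_to_pm[OF idx_add[OF assms idx_mult[OF assms]]])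
  then show ?case using Suc by (simp only: power_Suc mult_single)
qed

lemma CHAR_poly_mapping: "CHAR((nat \<Rightarrow>\<^sub>0 nat) \<Rightarrow>\<^sub>0 'a::comm_semiring_1) = CHAR('a)"
proof (rule CHAR_eqI)
  show "of_nat CHAR('a) = (0 :: (nat \<Rightarrow>\<^sub>0 nat) \<Rightarrow>\<^sub>0 'a)"
    by (simp only: single_of_nat[symmetric] of_nat_CHAR single_zero)
next
  fix x assume "of_nat x = (0 :: (nat \<Rightarrow>\<^sub>0 nat) \<Rightarrow>\<^sub>0 'a)"
  then have "Poly_Mapping.lookup (of_nat x :: (nat \<Rightarrow>\<^sub>0 nat) \<Rightarrow>\<^sub>0 'a) 0 = 0" by (simp only: lookup_zero)
  then have "of_nat x = (0::'a)" by (simp only: lookup_of_nat simp_thms when_simps(1))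
  then show "CHAR('a) dvd x" by (simp add: of_nat_eq_0_iff_char_dvd)
qed

lemma sum_lower_idx_scaled:
  assumes p0: "0 < p" and \<mu>: "\<mu> \<in> idx n"
  shows "(\<Sum>\<gamma>\<in>lower_idx n \<mu>. if (\<lambda>i. p * \<gamma> i) = \<mu> then f \<gamma> else 0)
       = (if \<forall>i. p dvd \<mu> i then f (\<lambda>i. \<mu> i div p) else 0)"
proof (cases "\<forall>i. p dvd \<mu> i")
  case True
  define \<gamma>0 where "\<gamma>0 = (\<lambda>i. \<mu> i div p)"
  have "\<gamma>0 \<in> lower_idx n \<mu>" using \<mu> by (auto simp: \<gamma>0_def lower_idx_def idx_def)
  moreover have "((\<lambda>i. p * \<gamma> i) = \<mu>) = (\<gamma> = \<gamma>0)" for \<gamma>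
    using True p0 by (auto simp: \<gamma>0_def fun_eq_iff) (metis nonzero_mult_div_cancel_left not_gr0)
  ultimately show ?thesis using True by (simp add: finite_lower_idx \<gamma>0_def)
next
  case False
  then have "(\<lambda>i. p * \<gamma> i) \<noteq> \<mu>" for \<gamma> by auto
  then show ?thesis by (subst if_not_P[OF False]) simp
qed

lemma K_pow_char_coeff:
  fixes a :: "(nat \<Rightarrow> nat) \<Rightarrow> 'k::field"
  assumes pr: "prime p" and ch: "CHAR('k) = p" and mu: "\<mu> \<in> idx n"
  shows "(a [^]\<^bsub>K absv n\<^esub> p) \<mu> = (if \<forall>i. p dvd \<mu> i then a (\<lambda>i. \<mu> i div p) ^ p else 0)"
proof -
  have "(a [^]\<^bsub>K absv n\<^esub> p) \<mu> = Poly_Mapping.lookup ((trunc_pm n \<mu> a) ^ p) (to_pm \<mu>)"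
    by (rule K_pow_eq_lookup_trunc_pm[OF mu]) simp
  also have "(trunc_pm n \<mu> a) ^ p = (\<Sum>\<gamma>\<in>lower_idx n \<mu>. (Poly_Mapping.single (to_pm \<gamma>) (a \<gamma>)) ^ p)"
    unfolding trunc_pm_def
  proof (rule freshmans_dream_sum)
    show "prime CHAR((nat \<Rightarrow>\<^sub>0 nat) \<Rightarrow>\<^sub>0 'k)" by (simp only: CHAR_poly_mapping ch pr)
    show "p = CHAR((nat \<Rightarrow>\<^sub>0 nat) \<Rightarrow>\<^sub>0 'k)" by (simp only: CHAR_poly_mapping ch)
  qed
  also have "\<dots> = (\<Sum>\<gamma>\<in>lower_idx n \<mu>. Poly_Mapping.single (to_pm (\<lambda>i. p * \<gamma> i)) (a \<gamma> ^ p))"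
    by (intro sum.cong) (auto simp: lower_idx_def single_power_to_pm)
  also have "Poly_Mapping.lookup \<dots> (to_pm \<mu>)
      = (\<Sum>\<gamma>\<in>lower_idx n \<mu>. if to_pm (\<lambda>i. p * \<gamma> i) = to_pm \<mu> then a \<gamma> ^ p else 0)"
    unfolding lookup_sum lookup_single by (simp add: when_def)
  also have "\<dots> = (\<Sum>\<gamma>\<in>lower_idx n \<mu>. if (\<lambda>i. p * \<gamma> i) = \<mu> then a \<gamma> ^ p else 0)"
    using to_pm_eq_iff[OF idx_mult mu] by (intro sum.cong refl) (auto simp: lower_idx_def)
  finally show ?thesis by (simp only: sum_lower_idx_scaled[OF prime_gt_0_nat[OF pr] mu])
qed

section \<open>Coefficient functionals of \<open>p\<^sup>-\<^sup>1\<close>-linear maps\<close>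

lemma finite_box: "finite {\<beta>\<in>idx n. \<forall>i<n. \<beta> i < B i}"
proof (rule finite_subset[OF _ finite_lower_idx[of n B]])
  show "{\<beta>\<in>idx n. \<forall>i<n. \<beta> i < B i} \<subseteq> lower_idx n B"
    by (auto simp: lower_idx_def idx_def) (metis less_imp_le not_le zero_le)
qed

lemma sum_first_exceeding:
  fixes B \<nu> :: "nat \<Rightarrow> nat" and c :: "'a::comm_monoid_add"
  assumes "\<exists>i<n. B i \<le> \<nu> i"
  shows "(\<Sum>i<n. if (\<forall>j<i. \<nu> j < B j) \<and> B i \<le> \<nu> i then c else 0) = c"
proof -
  define i0 where "i0 = (LEAST i. B i \<le> \<nu> i)"
  have "\<exists>i. B i \<le> \<nu> i" using assms by blast
  then have i0: "B i0 \<le> \<nu> i0" unfolding i0_def by (rule LeastI_ex)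
  have below_i0: "\<nu> j < B j" if "j < i0" for j
    using not_less_Least[OF that[unfolded i0_def]] by simp
  have "i0 < n" using assms Least_le[of "\<lambda>i. B i \<le> \<nu> i"] unfolding i0_def by (meson le_less_trans)
  have "((\<forall>j<i. \<nu> j < B j) \<and> B i \<le> \<nu> i) \<longleftrightarrow> i = i0" for i
    using i0 below_i0 by (cases i i0 rule: linorder_cases) (auto simp: not_le)
  then show ?thesis using \<open>i0 < n\<close> by simp
qed

lemma box_tail_decomposition:
  fixes x :: "(nat \<Rightarrow> nat) \<Rightarrow> 'a::comm_monoid_add"
  assumes x: "\<And>\<nu>. \<nu> \<notin> idx n \<Longrightarrow> x \<nu> = 0"
  shows "x = (\<lambda>\<nu>. (\<Sum>\<beta>\<in>{\<beta>\<in>idx n. \<forall>i<n. \<beta> i < B i}. ps_monom (x \<beta>) \<beta> \<nu>)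
              + (\<Sum>i<n. if \<nu> \<in> idx n \<and> (\<forall>j<i. \<nu> j < B j) \<and> B i \<le> \<nu> i then x \<nu> else 0))"
    (is "_ = (\<lambda>\<nu>. ?box \<nu> + ?tails \<nu>)")
proof
  fix \<nu>
  show "x \<nu> = ?box \<nu> + ?tails \<nu>"
  proof (cases "\<nu> \<in> idx n \<and> (\<forall>i<n. \<nu> i < B i)")
    case True
    then have "?box \<nu> = x \<nu>"
      using finite_box[of n B] unfolding ps_monom_def
      by (simp add: eq_commute[of _ \<nu>] if_distrib cong: if_cong)
    moreover have "?tails \<nu> = 0" using True by (intro sum.neutral) (auto simp: not_le)
    ultimately show ?thesis by simp
  next
    case False
    then have "?box \<nu> = 0" by (intro sum.neutral) (auto simp: ps_monom_def)
    moreover have "?tails \<nu> = x \<nu>"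
    proof (cases "\<nu> \<in> idx n")
      case True
      with False have "\<exists>i<n. B i \<le> \<nu> i" by (auto simp: not_less)
      with True show ?thesis using sum_first_exceeding[of n B \<nu> "x \<nu>"] by simp
    qed (simp add: x)
    ultimately show ?thesis by simp
  qed
qed

lemma ray_inj:
  assumes "0 < p" "0 < d"
  shows "inj (\<lambda>j i. p * unit_idx 0 (d * j) i + \<beta> i)"
proof
  fix j j' assume "(\<lambda>i. p * unit_idx 0 (d * j) i + \<beta> i) = (\<lambda>i. p * unit_idx 0 (d * j') i + \<beta> i)"
  then have "p * unit_idx 0 (d * j) 0 + \<beta> 0 = p * unit_idx 0 (d * j') 0 + \<beta> 0" by (rule fun_cong)
  then show "j = j'" using assms by (simp add: unit_idx_def)
qed

lemma ray_late:
  assumes "0 < p" "0 < d"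
  shows "\<beta> 0 + p * (d * (J + 1)) \<le> p * unit_idx 0 (d * j) 0 + \<beta> 0 \<longleftrightarrow> J < j"
proof -
  have "\<beta> 0 + p * (d * (J + 1)) \<le> p * unit_idx 0 (d * j) 0 + \<beta> 0 \<longleftrightarrow> d * Suc J \<le> d * j"
    using assms by (simp add: unit_idx_def)
  also have "\<dots> \<longleftrightarrow> J < j" using assms by (simp only: mult_le_cancel1) auto
  finally show ?thesis .
qed

definition sparse_series :: "(nat \<Rightarrow> nat \<Rightarrow> nat) \<Rightarrow> (nat \<Rightarrow> 'a) \<Rightarrow> (nat \<Rightarrow> nat) \<Rightarrow> 'a::zero" where
  "sparse_series pos c = (\<lambda>\<nu>. if \<nu> \<in> range pos then c (inv_into UNIV pos \<nu>) else 0)"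

lemma sparse_series_split:
  fixes pos :: "nat \<Rightarrow> nat \<Rightarrow> nat" and c :: "nat \<Rightarrow> 'a::comm_monoid_add"
  assumes pos: "inj pos" and late: "\<And>j. P (pos j) \<longleftrightarrow> J < j"
  shows "sparse_series pos c = (\<lambda>\<nu>. (\<Sum>j\<le>J. ps_monom (c j) (pos j) \<nu>)
           + (if P \<nu> then sparse_series pos c \<nu> else 0))"
proof
  fix \<nu>
  show "sparse_series pos c \<nu> = (\<Sum>j\<le>J. ps_monom (c j) (pos j) \<nu>) + (if P \<nu> then sparse_series pos c \<nu> else 0)"
  proof (cases "\<nu> \<in> range pos")
    case True
    then obtain j where j: "\<nu> = pos j" by blast
    have "(\<Sum>j'\<le>J. ps_monom (c j') (pos j') \<nu>) = (\<Sum>j'\<le>J. if j' = j then c j else 0)"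
      unfolding ps_monom_def j using injD[OF pos] by (intro sum.cong) auto
    also have "\<dots> = (if j \<le> J then c j else 0)" by simp
    finally show ?thesis using late[of j] pos by (auto simp: j sparse_series_def)
  next
    case False
    then have "ps_monom (c j) (pos j) \<nu> = 0" for j by (auto simp: ps_monom_def)
    then show ?thesis using False by (simp add: sparse_series_def)
  qed
qed

lemma (in nonarch_field) sparse_series_in_conv_series:
  assumes "range pos \<subseteq> idx n" and "\<And>j. absv (c j) \<le> 1"
  shows "sparse_series pos c \<in> conv_series absv n"
  using assms by (intro bounded_in_conv_series[where B = 1]) (auto simp: sparse_series_def)
locale pinv_linear_K = nonarch_field absv for absv :: "'k::field \<Rightarrow> real" +
  fixes n p :: nat and \<phi>
  assumes pinv: "pinv_linear (K absv n) p \<phi>"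
begin

lemma phi_in: "x \<in> conv_series absv n \<Longrightarrow> \<phi> x \<in> conv_series absv n"
  using pinv by (simp add: pinv_linear_def K_simps)
lemma phi_add: "x \<in> conv_series absv n \<Longrightarrow> y \<in> conv_series absv n \<Longrightarrow> \<phi> (\<lambda>\<nu>. x \<nu> + y \<nu>) = (\<lambda>\<nu>. \<phi> x \<nu> + \<phi> y \<nu>)"
  using pinv by (simp add: pinv_linear_def K_simps)
lemma phi_frob: "r \<in> conv_series absv n \<Longrightarrow> x \<in> conv_series absv n \<Longrightarrow>
   \<phi> (ps_mult n (r [^]\<^bsub>K absv n\<^esub> p) x) = ps_mult n r (\<phi> x)"
  using pinv by (simp add: pinv_linear_def K_simps)

lemma phi_zero: "\<phi> (\<lambda>_. 0) = (\<lambda>_. 0)"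
proof -
  have "\<phi> (\<lambda>_. 0) = (\<lambda>\<nu>. \<phi> (\<lambda>_. 0) \<nu> + \<phi> (\<lambda>_. 0) \<nu>)"
    using phi_add[OF zero_in_conv_series zero_in_conv_series] by simp
  then show ?thesis by (metis add_cancel_right_right)
qed

lemma phi_sum:
  assumes "finite A" "\<forall>j\<in>A. F j \<in> conv_series absv n"
  shows "\<phi> (\<lambda>\<nu>. \<Sum>j\<in>A. F j \<nu>) = (\<lambda>\<nu>. \<Sum>j\<in>A. \<phi> (F j) \<nu>)"
  using assms
proof (induction A rule: finite_induct)
  case empty then show ?case using phi_zero by simp
next
  case (insert x A)
  have "\<phi> (\<lambda>\<nu>. \<Sum>j\<in>insert x A. F j \<nu>) = \<phi> (\<lambda>\<nu>. F x \<nu> + (\<Sum>j\<in>A. F j \<nu>))"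
    using insert by simp
  also have "\<dots> = (\<lambda>\<nu>. \<phi> (F x) \<nu> + \<phi> (\<lambda>\<nu>. \<Sum>j\<in>A. F j \<nu>) \<nu>)"
    using insert sum_in_conv_series[of A F n] by (intro phi_add) auto
  finally show ?case using insert by simp
qed

lemma phi_monom_frob:
  assumes "\<gamma> \<in> idx n" "w \<in> conv_series absv n"
  shows "\<phi> (ps_mult n (ps_monom (c^p) (\<lambda>i. p * \<gamma> i)) w) = ps_mult n (ps_monom c \<gamma>) (\<phi> w)"
proof -
  have e: "ps_monom c \<gamma> [^]\<^bsub>K absv n\<^esub> p = ps_monom (c^p) (\<lambda>i. p * \<gamma> i)"
    by (rule K_pow_ps_monom[OF assms(1)])
  show ?thesis using phi_frob[OF ps_monom_in[OF assms(1)] assms(2), of c] unfolding e .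
qed

lemma phi_monom_shift_coeff:
  assumes \<delta>: "\<delta> \<in> idx n" and \<beta>: "\<beta> \<in> idx n" and \<gamma>: "\<gamma> \<in> idx n" and le: "\<forall>i. \<delta> i \<le> \<gamma> i"
  shows "\<phi> (ps_monom c (\<lambda>i. p * \<delta> i + \<beta> i)) \<gamma> = \<phi> (ps_monom c \<beta>) (\<lambda>i. \<gamma> i - \<delta> i)"
proof -
  have "ps_monom c (\<lambda>i. p * \<delta> i + \<beta> i) = ps_mult n (ps_monom (1 ^ p) (\<lambda>i. p * \<delta> i)) (ps_monom c \<beta>)"
    using ps_mult_monom_monom[OF idx_mult[OF \<delta>] \<beta>, of 1 p c] by simp
  then show ?thesis
    using phi_monom_frob[OF \<delta> ps_monom_in[OF \<beta>], of 1] \<gamma> le by (simp add: ps_mult_monom_left[OF \<delta>])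
qed

lemma phi_coeff_0_if_divisible:
  assumes x: "x \<in> conv_series absv n" and g: "\<gamma> \<in> idx n"
    and supp: "\<forall>\<nu>. x \<nu> \<noteq> 0 \<longrightarrow> (\<forall>i. p * \<gamma> i \<le> \<nu> i)"
    and nle: "\<not> (\<forall>i. \<gamma> i \<le> \<nu> i)"
  shows "\<phi> x \<nu> = 0"
proof -
  have pg: "(\<lambda>i. p * \<gamma> i) \<in> idx n" using idx_mult[OF g] .
  define w where "w = (\<lambda>\<nu>. if \<nu> \<in> idx n then x (\<lambda>i. \<nu> i + p * \<gamma> i) else 0)"
  have w: "w \<in> conv_series absv n" unfolding w_def by (rule shift_in_conv_series[OF x pg])
  have eq: "x = ps_mult n (ps_monom (1^p) (\<lambda>i. p * \<gamma> i)) w"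
  proof
    fix \<mu>
    show "x \<mu> = ps_mult n (ps_monom (1^p) (\<lambda>i. p * \<gamma> i)) w \<mu>"
    proof (cases "\<mu> \<in> idx n \<and> (\<forall>i. p * \<gamma> i \<le> \<mu> i)")
      case True
      then have "(\<lambda>i. (\<mu> i - p * \<gamma> i) + p * \<gamma> i) = \<mu>" by auto
      then show ?thesis using True unfolding ps_mult_monom_left[OF pg] w_def
        by (simp add: idx_diff)
    next
      case False
      then have "x \<mu> = 0" using supp conv_series_outside[OF x] by blast
      then show ?thesis using False unfolding ps_mult_monom_left[OF pg] by auto
    qed
  qed
  have "\<phi> x = ps_mult n (ps_monom 1 \<gamma>) (\<phi> w)"
    using phi_monom_frob[OF g w, of 1] eq by simp
  then show ?thesis using nle by (auto simp: ps_mult_monom_left[OF g])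
qed

lemma nonzero_coeff_on_monom:
  assumes x: "x \<in> conv_series absv n" and nz: "\<phi> x \<alpha> \<noteq> 0"
  shows "\<exists>\<beta>\<in>idx n. \<exists>c. \<phi> (ps_monom c \<beta>) \<alpha> \<noteq> 0"
proof (rule ccontr)
  assume monom_0: "\<not> ?thesis"
  \<comment> \<open>Outside the box \<open>\<nu> < p(\<alpha> + 1)\<close> the series is divisible by some \<open>X\<^sub>i\<^bsup>p(\<alpha>\<^sub>i+1)\<^esup>\<close>,
    which does not contribute to the \<open>\<alpha>\<close>-coefficient of its image.\<close>
  define B where "B i = p * (\<alpha> i + 1)" for i
  define F where "F = {\<beta>\<in>idx n. \<forall>i<n. \<beta> i < B i}"
  define y where "y i = (\<lambda>\<nu>. if \<nu> \<in> idx n \<and> (\<forall>j<i. \<nu> j < B j) \<and> B i \<le> \<nu> i then x \<nu> else 0)" for i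
  define P where "P = (\<lambda>\<nu>. \<Sum>\<beta>\<in>F. ps_monom (x \<beta>) \<beta> \<nu>)"
  define Y where "Y = (\<lambda>\<nu>. \<Sum>i<n. y i \<nu>)"
  have P: "P \<in> conv_series absv n"
    unfolding P_def by (intro sum_in_conv_series) (auto simp: F_def finite_box intro: ps_monom_in)
  have tails: "y i \<in> conv_series absv n" for i
    unfolding y_def by (rule restrict_in_conv_series[OF x])
  then have Y: "Y \<in> conv_series absv n"
    unfolding Y_def by (intro sum_in_conv_series) auto
  have "x = (\<lambda>\<nu>. P \<nu> + Y \<nu>)"
    unfolding P_def Y_def F_def y_def by (rule box_tail_decomposition) (rule conv_series_outside[OF x])
  then have "\<phi> x \<alpha> = \<phi> P \<alpha> + \<phi> Y \<alpha>" using phi_add[OF P Y] by simp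
  also have "\<dots> = (\<Sum>\<beta>\<in>F. \<phi> (ps_monom (x \<beta>) \<beta>) \<alpha>) + (\<Sum>i<n. \<phi> (y i) \<alpha>)"
    unfolding P_def Y_def using tails
    by (subst phi_sum, auto simp: F_def finite_box intro: ps_monom_in)+
  also have "\<dots> = 0"
  proof -
    have "\<phi> (ps_monom (x \<beta>) \<beta>) \<alpha> = 0" if "\<beta> \<in> F" for \<beta>
      using monom_0 that by (auto simp: F_def)
    moreover have "\<phi> (y i) \<alpha> = 0" if "i < n" for i
    proof (rule phi_coeff_0_if_divisible[OF tails idx_unit[OF that]])
      show "\<forall>\<nu>. y i \<nu> \<noteq> 0 \<longrightarrow> (\<forall>j. p * unit_idx i (\<alpha> i + 1) j \<le> \<nu> j)"
        by (auto simp: y_def unit_idx_def B_def split: if_splits)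
      show "\<not> (\<forall>j. unit_idx i (\<alpha> i + 1) j \<le> \<alpha> j)"
        by (auto simp: unit_idx_def intro!: exI[of _ i])
    qed
    ultimately show ?thesis by simp
  qed
  finally show False using nz by simp
qed

lemma monom_coeff_root_p_linear:
  assumes \<beta>: "\<beta> \<in> idx n"
  shows "root_p_linear p (\<lambda>c. \<phi> (ps_monom c \<beta>) \<alpha>)"
  unfolding root_p_linear_def
proof (intro conjI allI)
  fix c c' :: 'k
  have "ps_monom (c + c') \<beta> = (\<lambda>\<nu>. ps_monom c \<beta> \<nu> + ps_monom c' \<beta> \<nu>)"
    by (auto simp: ps_monom_def fun_eq_iff)
  then show "\<phi> (ps_monom (c + c') \<beta>) \<alpha> = \<phi> (ps_monom c \<beta>) \<alpha> + \<phi> (ps_monom c' \<beta>) \<alpha>"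
    using phi_add[OF ps_monom_in[OF \<beta>] ps_monom_in[OF \<beta>]] by simp
next
  fix c x :: 'k
  have "ps_monom (c ^ p * x) \<beta> = ps_mult n (ps_monom (c ^ p) (\<lambda>i. p * (\<lambda>_. 0::nat) i)) (ps_monom x \<beta>)"
    using ps_mult_monom_monom[OF idx_mult[OF idx_zero] \<beta>, of "c ^ p" p x] by simp
  then have "\<phi> (ps_monom (c ^ p * x) \<beta>) = ps_mult n (ps_monom c (\<lambda>_. 0)) (\<phi> (ps_monom x \<beta>))"
    using phi_monom_frob[OF idx_zero ps_monom_in[OF \<beta>], of c] by simp
  then show "\<phi> (ps_monom (c ^ p * x) \<beta>) \<alpha> = c * \<phi> (ps_monom x \<beta>) \<alpha>"
    using conv_series_outside[OF phi_in[OF ps_monom_in[OF \<beta>, of x]], of \<alpha>]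
    by (auto simp: ps_mult_monom_left[OF idx_zero])
qed

lemma coeff_of_sparse_series:
  assumes n0: "0 < n" and p0: "0 < p" and \<beta>: "\<beta> \<in> idx n" and \<alpha>: "\<alpha> \<in> idx n" and d: "\<alpha> 0 < d"
    and c: "\<And>j. absv (c j) \<le> 1"
  defines "x \<equiv> sparse_series (\<lambda>j i. p * unit_idx 0 (d * j) i + \<beta> i) c"
  shows "\<phi> x (\<lambda>i. \<alpha> i + unit_idx 0 (d * J) i)
       = (\<Sum>j\<le>J. \<phi> (ps_monom (c j) \<beta>) (\<lambda>i. \<alpha> i + unit_idx 0 (d * (J - j)) i))"
proof -
  define \<gamma> where "\<gamma> = (\<lambda>i. \<alpha> i + unit_idx 0 (d * J) i)"
  have \<gamma>: "\<gamma> \<in> idx n" unfolding \<gamma>_def using idx_add[OF \<alpha> idx_unit[OF n0]] .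
  \<comment> \<open>The terms with \<open>j > J\<close> are divisible by \<open>X\<^sub>0\<^bsup>p s\<^esup>\<close>, so they do not contribute at \<open>\<gamma>\<close>.\<close>
  define s where "s = d * (J + 1)"
  define pos where "pos = (\<lambda>j i. p * unit_idx 0 (d * j) i + \<beta> i)"
  have "inj pos" and late: "\<And>j. \<beta> 0 + p * s \<le> pos j 0 \<longleftrightarrow> J < j"
    unfolding pos_def s_def using ray_inj[OF p0, of d \<beta>] ray_late[OF p0, of d \<beta> J] d by auto
  have pos_idx: "pos j \<in> idx n" for j
    unfolding pos_def using idx_add[OF idx_mult[OF idx_unit[OF n0]] \<beta>] by simp
  have x: "x \<in> conv_series absv n"
    unfolding x_def pos_def[symmetric] using pos_idx c by (intro sparse_series_in_conv_series) auto
  define tail where "tail = (\<lambda>\<nu>. if \<beta> 0 + p * s \<le> \<nu> 0 then x \<nu> else 0)"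
  define M where "M j = ps_monom (c j) (pos j)" for j
  have x_split: "x = (\<lambda>\<nu>. (\<Sum>j\<le>J. M j \<nu>) + tail \<nu>)"
    unfolding x_def pos_def[symmetric] tail_def M_def
    by (rule sparse_series_split[where P = "\<lambda>\<nu>. \<beta> 0 + p * s \<le> \<nu> 0", OF \<open>inj pos\<close> late])
  have M_in: "M j \<in> conv_series absv n" for j unfolding M_def by (rule ps_monom_in[OF pos_idx])
  have tail_in: "tail \<in> conv_series absv n" unfolding tail_def by (rule restrict_in_conv_series[OF x])
  have \<phi>_x: "\<phi> x = (\<lambda>\<nu>. \<phi> (\<lambda>\<nu>. \<Sum>j\<le>J. M j \<nu>) \<nu> + \<phi> tail \<nu>)"
    unfolding x_split using M_in by (intro phi_add[OF sum_in_conv_series tail_in]) auto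
  have \<phi>_sum: "\<phi> (\<lambda>\<nu>. \<Sum>j\<le>J. M j \<nu>) = (\<lambda>\<nu>. \<Sum>j\<le>J. \<phi> (M j) \<nu>)"
    using M_in by (intro phi_sum) auto
  have tail_0: "\<phi> tail \<gamma> = 0"
  proof (rule phi_coeff_0_if_divisible[OF tail_in idx_unit[OF n0]])
    show "\<forall>\<nu>. tail \<nu> \<noteq> 0 \<longrightarrow> (\<forall>i. p * unit_idx 0 s i \<le> \<nu> i)"
      by (auto simp: tail_def unit_idx_def)
    have "\<not> unit_idx 0 s 0 \<le> \<gamma> 0" using d by (simp add: unit_idx_def \<gamma>_def s_def)
    then show "\<not> (\<forall>i. unit_idx 0 s i \<le> \<gamma> i)" by blast
  qed
  have "\<phi> x \<gamma> = (\<Sum>j\<le>J. \<phi> (M j) \<gamma>)"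
    using fun_cong[OF \<phi>_x, of \<gamma>] fun_cong[OF \<phi>_sum, of \<gamma>] tail_0 by simp
  also have "\<dots> = (\<Sum>j\<le>J. \<phi> (ps_monom (c j) \<beta>) (\<lambda>i. \<alpha> i + unit_idx 0 (d * (J - j)) i))"
  proof (rule sum.cong[OF refl])
    fix j assume j: "j \<in> {..J}"
    then have "\<forall>i. unit_idx 0 (d * j) i \<le> \<gamma> i"
      by (auto simp: unit_idx_def \<gamma>_def intro: trans_le_add2 mult_le_mono2)
    then have "\<phi> (M j) \<gamma> = \<phi> (ps_monom (c j) \<beta>) (\<lambda>i. \<gamma> i - unit_idx 0 (d * j) i)"
      unfolding M_def pos_def by (rule phi_monom_shift_coeff[OF idx_unit[OF n0] \<beta> \<gamma>])
    also have "(\<lambda>i. \<gamma> i - unit_idx 0 (d * j) i) = (\<lambda>i. \<alpha> i + unit_idx 0 (d * (J - j)) i)"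
      using j by (auto simp: unit_idx_def \<gamma>_def fun_eq_iff diff_mult_distrib2)
    finally show "\<phi> (M j) \<gamma> = \<phi> (ps_monom (c j) \<beta>) (\<lambda>i. \<alpha> i + unit_idx 0 (d * (J - j)) i)" .
  qed
  finally show ?thesis unfolding \<gamma>_def .
qed

lemma monom_coeff_bounded:
  assumes n0: "0 < n" and p0: "0 < p" and \<beta>: "\<beta> \<in> idx n"
  obtains T where "\<And>c. absv c \<le> 1 \<Longrightarrow> absv (\<phi> (ps_monom c \<beta>) \<alpha>) \<le> T"
proof (rule ccontr)
  assume "\<not> thesis"
  with that have unbounded: "\<exists>c. absv c \<le> 1 \<and> T < absv (\<phi> (ps_monom c \<beta>) \<alpha>)" for T
    by (meson not_le)
  define F where "F \<gamma> c = \<phi> (ps_monom c \<beta>) \<gamma>" for \<gamma> c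
  obtain c1 where "0 < absv (F \<alpha> c1)" using unbounded[of 0] unfolding F_def by blast
  then have \<alpha>: "\<alpha> \<in> idx n"
    using conv_series_outside[OF phi_in[OF ps_monom_in[OF \<beta>]]] unfolding F_def by fastforce
  define d where "d = \<alpha> 0 + 1"
  define S where "S J c = (\<Sum>j<J. F (\<lambda>i. \<alpha> i + unit_idx 0 (d * (J - j)) i) (c j))" for J c
  \<comment> \<open>\<open>c\<^sub>J\<close> is chosen after \<open>c\<^sub>0, \<dots>, c\<^sub>J\<^sub>-\<^sub>1\<close>, dominating their contribution \<open>S J c\<close> at \<open>\<alpha> + d J e\<^sub>0\<close>.\<close>
  have "\<exists>c. \<forall>J. absv (c J) \<le> 1 \<and> absv (S J c) + (real J + 1) ^ (J + 1) \<le> absv (F \<alpha> (c J))"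
  proof (rule dependent_wellorder_choice)
    fix J and c c' :: "nat \<Rightarrow> 'k" and t
    assume "\<And>j. j < J \<Longrightarrow> c j = c' j"
    then have "S J c = S J c'" unfolding S_def by (intro sum.cong) auto
    then show "(absv t \<le> 1 \<and> absv (S J c) + (real J + 1) ^ (J + 1) \<le> absv (F \<alpha> t)) =
               (absv t \<le> 1 \<and> absv (S J c') + (real J + 1) ^ (J + 1) \<le> absv (F \<alpha> t))" by simp
  next
    fix J and c :: "nat \<Rightarrow> 'k"
    show "\<exists>t. absv t \<le> 1 \<and> absv (S J c) + (real J + 1) ^ (J + 1) \<le> absv (F \<alpha> t)"
      using unbounded unfolding F_def by (meson less_imp_le)
  qed
  then obtain c where c1: "\<And>J. absv (c J) \<le> 1"
    and c_big: "\<And>J. absv (S J c) + (real J + 1) ^ (J + 1) \<le> absv (F \<alpha> (c J))" by blast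
  define x where "x = sparse_series (\<lambda>j i. p * unit_idx 0 (d * j) i + \<beta> i) c"
  have "(\<lambda>j i. p * unit_idx 0 (d * j) i + \<beta> i) j \<in> idx n" for j
    using idx_add[OF idx_mult[OF idx_unit[OF n0]] \<beta>] by simp
  then have x: "x \<in> conv_series absv n"
    unfolding x_def using c1 by (intro sparse_series_in_conv_series) auto
  have "(real J + 1) ^ (J + 1) \<le> absv (\<phi> x (\<lambda>i. \<alpha> i + unit_idx 0 (d * J) i))" for J
  proof -
    have "(\<lambda>i. \<alpha> i + unit_idx 0 (d * (J - J)) i) = \<alpha>" by (auto simp: unit_idx_def)
    then have coeff: "\<phi> x (\<lambda>i. \<alpha> i + unit_idx 0 (d * J) i) = F \<alpha> (c J) + S J c"
      using coeff_of_sparse_series[OF n0 p0 \<beta> \<alpha> _ c1, where d = d and J = J]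
      by (simp add: x_def d_def F_def S_def lessThan_Suc_atMost[symmetric])
    have "0 < (real J + 1) ^ (J + 1)" by simp
    then have "absv (S J c) < absv (F \<alpha> (c J))" using c_big[of J] by linarith
    then have "absv (F \<alpha> (c J)) \<le> absv (F \<alpha> (c J) + S J c)" by (rule absv_add_dominant)
    then show ?thesis unfolding coeff using c_big[of J] absv_nonneg[of "S J c"] by linarith
  qed
  then show False using conv_series_coeff_growth[OF phi_in[OF x] \<alpha> n0] by (meson not_le)
qed

lemma exists_continuous_root_p_linear:
  assumes nt: "nontrivial_value_group absv" and n0: "0 < n" and p0: "0 < p"
    and x: "x \<in> conv_series absv n" and nz: "\<phi> x \<alpha> \<noteq> 0"
  shows "\<exists>g. root_p_linear p g \<and> root_p_continuous absv p g \<and> (\<exists>c. g c \<noteq> 0)"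
proof -
  obtain \<beta> c where \<beta>: "\<beta> \<in> idx n" and c: "\<phi> (ps_monom c \<beta>) \<alpha> \<noteq> 0"
    using nonzero_coeff_on_monom[OF x nz] by blast
  obtain T where T: "\<And>c. absv c \<le> 1 \<Longrightarrow> absv (\<phi> (ps_monom c \<beta>) \<alpha>) \<le> T"
    using monom_coeff_bounded[OF n0 p0 \<beta>] by blast
  have "root_p_continuous absv p (\<lambda>c. \<phi> (ps_monom c \<beta>) \<alpha>)"
    by (rule root_p_continuous_if_bounded[OF nt monom_coeff_root_p_linear[OF \<beta>] p0 T])
  with monom_coeff_root_p_linear[OF \<beta>] c show ?thesis by blast
qed

end

section \<open>Splittings from continuous linear maps\<close>

definition frob_pullback :: "nat \<Rightarrow> nat \<Rightarrow> ('k \<Rightarrow> 'k) \<Rightarrow> ((nat \<Rightarrow> nat) \<Rightarrow> 'k) \<Rightarrow> (nat \<Rightarrow> nat) \<Rightarrow> 'k::zero"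
  where "frob_pullback n p h x = (\<lambda>\<nu>. if \<nu> \<in> idx n then h (x (\<lambda>i. p * \<nu> i)) else 0)"

lemma frob_pullback_add:
  "root_p_linear p h \<Longrightarrow>
    frob_pullback n p h (\<lambda>\<nu>. x \<nu> + y \<nu>) = (\<lambda>\<nu>. frob_pullback n p h x \<nu> + frob_pullback n p h y \<nu>)"
  by (auto simp: frob_pullback_def root_p_linear_def)

lemma frob_pullback_one:
  assumes h: "root_p_linear p h" "h 1 = 1" and p0: "0 < p"
  shows "frob_pullback n p h (ps_monom 1 (\<lambda>_. 0)) = ps_monom 1 (\<lambda>_. 0)"
proof
  fix \<nu> :: "nat \<Rightarrow> nat"
  have "((\<lambda>i. p * \<nu> i) = (\<lambda>_. 0)) = (\<nu> = (\<lambda>_. 0))" using p0 by (auto simp: fun_eq_iff)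
  then show "frob_pullback n p h (ps_monom 1 (\<lambda>_. 0)) \<nu> = ps_monom 1 (\<lambda>_. 0) \<nu>"
    using h root_p_linear_0[OF h(1)] idx_zero by (auto simp: frob_pullback_def ps_monom_def)
qed

lemma sum_lower_idx_multiples:
  assumes p0: "0 < p"
    and vanish: "\<And>\<mu>. \<mu> \<in> lower_idx n (\<lambda>i. p * \<nu> i) \<Longrightarrow> \<not> (\<forall>i. p dvd \<mu> i) \<Longrightarrow> F \<mu> = 0"
  shows "(\<Sum>\<mu>\<in>lower_idx n (\<lambda>i. p * \<nu> i). F \<mu>) = (\<Sum>\<gamma>\<in>lower_idx n \<nu>. F (\<lambda>i. p * \<gamma> i))"
proof -
  have "(\<Sum>\<mu>\<in>lower_idx n (\<lambda>i. p * \<nu> i). F \<mu>) = (\<Sum>\<mu>\<in>(\<lambda>\<gamma> i. p * \<gamma> i) ` lower_idx n \<nu>. F \<mu>)"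
  proof (rule sum.mono_neutral_right[OF finite_lower_idx])
    show "(\<lambda>\<gamma> i. p * \<gamma> i) ` lower_idx n \<nu> \<subseteq> lower_idx n (\<lambda>i. p * \<nu> i)"
      by (auto simp: lower_idx_def idx_def)
    show "\<forall>\<mu>\<in>lower_idx n (\<lambda>i. p * \<nu> i) - (\<lambda>\<gamma> i. p * \<gamma> i) ` lower_idx n \<nu>. F \<mu> = 0"
    proof
      fix \<mu> assume \<mu>: "\<mu> \<in> lower_idx n (\<lambda>i. p * \<nu> i) - (\<lambda>\<gamma> i. p * \<gamma> i) ` lower_idx n \<nu>"
      have "\<not> (\<forall>i. p dvd \<mu> i)"
      proof
        assume "\<forall>i. p dvd \<mu> i"
        then have "\<mu> = (\<lambda>i. p * (\<mu> i div p))" by (auto simp: fun_eq_iff)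
        moreover have "(\<lambda>i. \<mu> i div p) \<in> lower_idx n \<nu>"
          using \<mu> p0 div_le_mono[of _ "p * \<nu> _" p] by (auto simp: lower_idx_def idx_def)
        ultimately have "\<mu> \<in> (\<lambda>\<gamma> i. p * \<gamma> i) ` lower_idx n \<nu>" by (rule image_eqI)
        with \<mu> show False by blast
      qed
      then show "F \<mu> = 0" using \<mu> vanish by blast
    qed
  qed
  also have "\<dots> = (\<Sum>\<gamma>\<in>lower_idx n \<nu>. F (\<lambda>i. p * \<gamma> i))"
    using p0 by (intro sum.reindex[unfolded comp_def]) (auto simp: inj_on_def fun_eq_iff)
  finally show ?thesis .
qed

lemma ps_mult_K_pow_char_at_multiple:
  fixes r x :: "(nat \<Rightarrow> nat) \<Rightarrow> 'k::field"
  assumes pr: "prime p" and ch: "CHAR('k) = p" and \<nu>: "\<nu> \<in> idx n"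
  shows "ps_mult n (r [^]\<^bsub>K absv n\<^esub> p) x (\<lambda>i. p * \<nu> i)
       = (\<Sum>\<gamma>\<in>lower_idx n \<nu>. r \<gamma> ^ p * x (\<lambda>i. p * (\<nu> i - \<gamma> i)))"
proof -
  have p0: "0 < p" using pr prime_gt_0_nat by blast
  define F where "F \<mu> = (r [^]\<^bsub>K absv n\<^esub> p) \<mu> * x (\<lambda>i. p * \<nu> i - \<mu> i)" for \<mu>
  have "ps_mult n (r [^]\<^bsub>K absv n\<^esub> p) x (\<lambda>i. p * \<nu> i) = (\<Sum>\<mu>\<in>lower_idx n (\<lambda>i. p * \<nu> i). F \<mu>)"
    using idx_mult[OF \<nu>] by (simp add: ps_mult_def F_def lower_idx_def)
  also have "\<dots> = (\<Sum>\<gamma>\<in>lower_idx n \<nu>. F (\<lambda>i. p * \<gamma> i))"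
    using K_pow_char_coeff[OF pr ch] by (intro sum_lower_idx_multiples[OF p0]) (auto simp: F_def lower_idx_def)
  also have "\<dots> = (\<Sum>\<gamma>\<in>lower_idx n \<nu>. r \<gamma> ^ p * x (\<lambda>i. p * (\<nu> i - \<gamma> i)))"
  proof (rule sum.cong[OF refl])
    fix \<gamma> assume "\<gamma> \<in> lower_idx n \<nu>"
    then have "(\<lambda>i. p * \<gamma> i) \<in> idx n" using idx_mult by (auto simp: lower_idx_def)
    then show "F (\<lambda>i. p * \<gamma> i) = r \<gamma> ^ p * x (\<lambda>i. p * (\<nu> i - \<gamma> i))"
      using p0 K_pow_char_coeff[OF pr ch] by (simp add: F_def diff_mult_distrib2)
  qed
  finally show ?thesis .
qed

lemma frob_pullback_K_pow:
  fixes r x :: "(nat \<Rightarrow> nat) \<Rightarrow> 'k::field"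
  assumes pr: "prime p" and ch: "CHAR('k) = p" and h: "root_p_linear p h"
  shows "frob_pullback n p h (ps_mult n (r [^]\<^bsub>K absv n\<^esub> p) x) = ps_mult n r (frob_pullback n p h x)"
proof
  fix \<nu>
  show "frob_pullback n p h (ps_mult n (r [^]\<^bsub>K absv n\<^esub> p) x) \<nu> = ps_mult n r (frob_pullback n p h x) \<nu>"
  proof (cases "\<nu> \<in> idx n")
    case True
    have "frob_pullback n p h (ps_mult n (r [^]\<^bsub>K absv n\<^esub> p) x) \<nu>
        = (\<Sum>\<gamma>\<in>lower_idx n \<nu>. h (r \<gamma> ^ p * x (\<lambda>i. p * (\<nu> i - \<gamma> i))))"
      using True by (simp add: frob_pullback_def ps_mult_K_pow_char_at_multiple[OF pr ch]
          root_p_linear_sum[OF h])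
    also have "\<dots> = ps_mult n r (frob_pullback n p h x) \<nu>"
      using True h by (auto simp: ps_mult_def lower_idx_def frob_pullback_def idx_diff root_p_linear_def
          intro!: sum.cong)
    finally show ?thesis .
  qed (simp add: frob_pullback_def ps_mult_def)
qed

lemma root_bound_from_power_weight:
  assumes "0 \<le> a" "a * R ^ p \<le> M" "0 < R" "0 < M" "0 < p"
  shows "a powr (1 / real p) \<le> M powr (1 / real p) / R"
proof -
  have "a powr (1 / real p) \<le> (M / R ^ p) powr (1 / real p)"
    using assms by (intro powr_mono2) (auto simp: field_simps)
  also have "\<dots> = M powr (1 / real p) / R"
    using assms by (simp add: powr_divide power_powr_inverse less_imp_le)
  finally show ?thesis .
qed

lemma max_1_weight_le:
  fixes C R R' M :: real
  assumes "0 < C" "0 < R'" "R' \<le> R" "R' \<le> 1" "0 < M"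
  shows "C * max 1 (M / R) * R' \<le> C * max 1 M"
proof -
  have "C * max 1 (M / R) * R' = C * max R' (M * (R' / R))"
    using assms by (simp add: max_mult_distrib_right)
  also have "M * (R' / R) \<le> M * 1" using assms by (intro mult_left_mono) auto
  then have "C * max R' (M * (R' / R)) \<le> C * max 1 M" using assms by (intro mult_left_mono) auto
  finally show ?thesis .
qed

context nonarch_field
begin

lemma frob_pullback_in_conv_series:
  assumes h_bound: "\<And>y. absv (h y) \<le> C * max 1 (absv y powr (1 / real p))"
    and C: "0 < C" and p0: "0 < p" and x: "x \<in> conv_series absv n"
  shows "frob_pullback n p h x \<in> conv_series absv n"
proof -
  obtain r M where r: "\<forall>i<n. r i > 0" "M > 0" "\<forall>\<nu>\<in>idx n. absv (x \<nu>) * (\<Prod>i<n. r i ^ \<nu> i) \<le> M"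
    using conv_seriesE[OF x] by blast
  \<comment> \<open>Radii \<open>\<le> 1\<close> absorb the constant term of the bound \<open>max 1 _\<close>.\<close>
  define r' where "r' i = min (r i) 1" for i
  have r'0: "\<forall>i<n. r' i > 0" using r by (simp add: r'_def)
  define Mp where "Mp = M powr (1 / real p)"
  have Mp0: "Mp > 0" using r by (simp add: Mp_def)
  have "absv (frob_pullback n p h x \<nu>) * (\<Prod>i<n. r' i ^ \<nu> i) \<le> C * max 1 Mp" if \<nu>: "\<nu> \<in> idx n" for \<nu>
  proof -
    define R where "R = (\<Prod>i<n. r i ^ \<nu> i)"
    define R' where "R' = (\<Prod>i<n. r' i ^ \<nu> i)"
    have R0: "R > 0" using r unfolding R_def by (intro prod_pos) auto
    have R'0: "R' > 0" using r'0 unfolding R'_def by (intro prod_pos) auto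
    have R'R: "R' \<le> R" unfolding R'_def R_def using r'0
      by (intro prod_mono) (auto simp: r'_def intro!: power_mono)
    have R'1: "R' \<le> 1" unfolding R'_def using r'0
      by (intro prod_le_1) (auto simp: r'_def intro!: power_le_one)
    have "(\<Prod>i<n. r i ^ (p * \<nu> i)) = R ^ p"
      unfolding R_def prod_power_distrib by (intro prod.cong refl) (simp add: power_mult[symmetric] mult.commute)
    moreover have "absv (x (\<lambda>i. p * \<nu> i)) * (\<Prod>i<n. r i ^ (p * \<nu> i)) \<le> M"
      using r(3) idx_mult[OF \<nu>] by auto
    ultimately have "absv (x (\<lambda>i. p * \<nu> i)) powr (1 / real p) \<le> Mp / R"
      unfolding Mp_def using R0 r(2) p0 absv_nonneg by (intro root_bound_from_power_weight) auto
    then have "absv (frob_pullback n p h x \<nu>) \<le> C * max 1 (Mp / R)"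
      using \<nu> h_bound[of "x (\<lambda>i. p * \<nu> i)"] C
      by (simp add: frob_pullback_def) (smt (verit) max.mono mult_left_mono)
    then have "absv (frob_pullback n p h x \<nu>) * R' \<le> C * max 1 (Mp / R) * R'"
      using R'0 by (intro mult_right_mono) auto
    also have "\<dots> \<le> C * max 1 Mp" using C R'0 R'R R'1 Mp0 by (rule max_1_weight_le)
    finally show ?thesis by (simp add: R'_def)
  qed
  moreover have "\<forall>\<nu>. \<nu> \<notin> idx n \<longrightarrow> frob_pullback n p h x \<nu> = 0" by (simp add: frob_pullback_def)
  ultimately show ?thesis using r'0 C Mp0 unfolding conv_series_def
    by (intro CollectI conjI) (auto intro!: exI[of _ r'] exI[of _ "C * max 1 Mp"])
qed

lemma normalized_root_p_linear_bound:
  assumes nt: "nontrivial_value_group absv" and p0: "0 < p"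
    and g: "root_p_linear p g" and cont: "root_p_continuous absv p g" and gx: "g x \<noteq> 0"
  obtains h C where "root_p_linear p h" "h 1 = 1" "0 < C"
    "\<And>y. absv (h y) \<le> C * max 1 (absv y powr (1 / real p))"
proof -
  obtain Cg where Cg: "Cg > 0" "\<forall>y. absv (g y) \<le> Cg * max 1 (absv y powr (1 / real p))"
    using continuous_root_p_linear_bound[OF nt g cont p0] by blast
  define h where "h y = g (x * y) / g x" for y
  have "h (y + z) = h y + h z" for y z
    using g by (simp add: h_def root_p_linear_def distrib_left add_divide_distrib)
  moreover have "h (c ^ p * y) = c * h y" for c y
  proof -
    have "g (x * (c ^ p * y)) = g (c ^ p * (x * y))" by (simp add: ac_simps)
    then show ?thesis using g by (simp add: h_def root_p_linear_def)
  qed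
  ultimately have "root_p_linear p h" by (simp add: root_p_linear_def)
  moreover have "h 1 = 1" using gx by (simp add: h_def)
  moreover define C where "C = Cg * max 1 (absv x powr (1 / real p)) / absv (g x)"
  moreover have gx0: "absv (g x) > 0" using gx absv_eq_0_iff absv_nonneg by (metis less_eq_real_def)
  moreover have "absv (h y) \<le> C * max 1 (absv y powr (1 / real p))" for y
  proof -
    have "absv (h y) = absv (g (x * y)) / absv (g x)"
      by (simp add: h_def divide_inverse absv_mult absv_inverse)
    also have "\<dots> \<le> Cg * max 1 (absv (x * y) powr (1 / real p)) / absv (g x)"
      using Cg(2) gx0 by (intro divide_right_mono) auto
    also have "absv (x * y) powr (1 / real p) = absv x powr (1 / real p) * absv y powr (1 / real p)"
      by (simp add: absv_mult powr_mult absv_nonneg)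
    also have "Cg * max 1 (absv x powr (1 / real p) * absv y powr (1 / real p)) / absv (g x)
        \<le> Cg * (max 1 (absv x powr (1 / real p)) * max 1 (absv y powr (1 / real p))) / absv (g x)"
      using Cg gx0 by (intro divide_right_mono mult_left_mono max_1_mult_le) auto
    also have "\<dots> = C * max 1 (absv y powr (1 / real p))" by (simp add: C_def)
    finally show ?thesis .
  qed
  moreover have "C > 0" unfolding C_def using Cg gx0 by (intro divide_pos_pos mult_pos_pos) auto
  ultimately show ?thesis using that by blast
qed

lemma frobenius_split_if_continuous_root_p_linear:
  assumes nt: "nontrivial_value_group absv" and pr: "prime p" and ch: "CHAR('k) = p"
    and g: "root_p_linear p g" and cont: "root_p_continuous absv p g" and gx: "g x \<noteq> 0"
  shows "frobenius_split (K absv n) p"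
proof -
  have p0: "0 < p" using pr prime_gt_0_nat by blast
  obtain h C where h: "root_p_linear p h" "h 1 = 1" and C: "0 < C"
    and h_bound: "\<And>y. absv (h y) \<le> C * max 1 (absv y powr (1 / real p))"
    using normalized_root_p_linear_bound[OF nt p0 g cont gx] by blast
  have "pinv_linear (K absv n) p (frob_pullback n p h)"
    unfolding pinv_linear_def K_simps
    using frob_pullback_in_conv_series[OF h_bound C p0] frob_pullback_add[OF h(1)]
      frob_pullback_K_pow[OF pr ch h(1)] by auto
  then show ?thesis
    unfolding frobenius_split_def K_simps using frob_pullback_one[OF h p0] by blast
qed

lemma nonzero_pinv_linear_if_frobenius_split:
  assumes "frobenius_split (K absv n) p"
  shows "has_nonzero_pinv_linear (K absv n) p"
proof -
  obtain \<phi> where "pinv_linear (K absv n) p \<phi>" and "\<phi> (ps_monom 1 (\<lambda>_. 0)) = ps_monom 1 (\<lambda>_. 0)"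
    using assms unfolding frobenius_split_def K_simps by blast
  moreover have "ps_monom (1::'k) (\<lambda>_. 0) \<noteq> (\<lambda>_. 0)" by (metis ps_monom_def one_neq_zero)
  ultimately show ?thesis
    unfolding has_nonzero_pinv_linear_def K_simps using ps_monom_in[OF idx_zero] by metis
qed

lemma continuous_root_p_linear_if_nonzero_pinv_linear:
  assumes nt: "nontrivial_value_group absv" and p0: "0 < p" and n0: "0 < n"
    and "has_nonzero_pinv_linear (K absv n) p"
  shows "\<exists>g. root_p_linear p g \<and> root_p_continuous absv p g \<and> (\<exists>c. g c \<noteq> 0)"
proof -
  obtain \<phi> x \<alpha> where \<phi>: "pinv_linear (K absv n) p \<phi>" and x: "x \<in> conv_series absv n"
    and "\<phi> x \<alpha> \<noteq> 0"
    using assms(4) by (auto simp: has_nonzero_pinv_linear_def K_simps fun_eq_iff)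
  interpret pinv_linear_K absv n p \<phi> by unfold_locales (fact \<phi>)
  show ?thesis using exists_continuous_root_p_linear[OF nt n0 p0 x \<open>\<phi> x \<alpha> \<noteq> 0\<close>] .
qed

end

theorem mainTheorem5:
  fixes absv :: "'k::field \<Rightarrow> real" and p :: nat
  assumes "nonarch_abs absv" and "abs_complete absv" and "nontrivial_value_group absv"
    and "prime p" and "CHAR('k) = p"
  defines "i \<equiv> (\<forall>n>0. frobenius_split (K absv n) p)"
    and "ii \<equiv> (\<forall>n>0. has_nonzero_pinv_linear (K absv n) p)"
    and "iii \<equiv> (\<exists>n>0. has_nonzero_pinv_linear (K absv n) p)"
    and "iv \<equiv> has_nonzero_pinv_linear (K absv 1) p"
    and "v \<equiv> frobenius_split (K absv 1) p"
    and "vi \<equiv> (\<exists>g. root_p_linear p g \<and> root_p_continuous absv p g \<and> (\<exists>x. g x \<noteq> 0))"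
  shows "(i \<longleftrightarrow> ii) \<and> (ii \<longleftrightarrow> iii) \<and> (iii \<longleftrightarrow> iv) \<and> (iv \<longleftrightarrow> v) \<and> (v \<longleftrightarrow> vi)"
proof -
  interpret nonarch_field absv by unfold_locales (fact assms(1))
  have p0: "0 < p" using assms(4) prime_gt_0_nat by blast
  have split: "frobenius_split (K absv n) p" if vi for n
    using \<open>vi\<close> frobenius_split_if_continuous_root_p_linear[OF assms(3-5)] unfolding vi_def by blast
  have nonzero: "has_nonzero_pinv_linear (K absv n) p" if "frobenius_split (K absv n) p" for n
    using that by (rule nonzero_pinv_linear_if_frobenius_split)
  have continuous: vi if "0 < n" "has_nonzero_pinv_linear (K absv n) p" for n
    unfolding vi_def by (rule continuous_root_p_linear_if_nonzero_pinv_linear[OF assms(3) p0 that])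
  have "i = vi" "ii = vi" "iii = vi" "iv = vi" "v = vi"
    unfolding i_def ii_def iii_def iv_def v_def using split nonzero continuous zero_less_one by blast+
  then show ?thesis by simp
qed

end
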